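(* Let $\mathcal A=\{A_i\}_{i\in\Lambda}$ be a finite collection of $SL_2(\mathbb R)$ matrices with a strictly invariant multicone $U\subset[0,\pi)$, and let $\Phi=\{\varphi_i\}_{i\in\Lambda}$, $\varphi_i=\varphi_{A_i}$, be the induced IFS. Let $c>0$, $\lambda>1$ be constants with $\|A_{\mathbf i}\|\ge c\lambda^n$ for all $\mathbf i\in\Lambda^n$, $n\in\mathbb N$ (such constants exist). Then: (i) (Bounded distortion) there exists $C'>1$ such that $\frac1{C'}\le\frac{|\varphi_{\mathbf i}'(x)|}{|\varphi_{\mathbf i}'(y)|}\le C'$ for all $x,y\in\overline U$, $\mathbf i\in\Lambda^n$, $n\in\mathbb N$; (ii) there exists $C''>0$ such that $\|\varphi_{\mathbf i}'\|_{\overline U}\le C''\lambda^{-2n}$ for all $\mathbf i\in\Lambda^n$, $n\in\mathbb N$; in particular $\Phi^k$ is contractive on $U$ in the metric of $\mathbb R/\pi\mathbb Z$ for all sufficiently large $k$; (iii) $s=s_{\mathcal A}/2$, where $s$ is the solution of $P_\Phi(s)=0$ and $s_{\mathcal A}$ is the critical exponent.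
   Context: $\mathbb{RP}^1$ is identified with $[0,\pi)\cong\mathbb R/\pi\mathbb Z$ with its metric; $\varphi_A$ is the induced action of $A$ and derivatives are taken in this coordinate. A multicone is a proper nonempty open subset of $\mathbb{RP}^1$ with finitely many components having pairwise disjoint closures; it is strictly invariant if $\varphi_i(\overline U)\subset U$ for all $i$. For $\mathbf i=i_1\ldots i_n$, $A_{\mathbf i}=A_{i_1}\cdots A_{i_n}$ and $\varphi_{\mathbf i}=\varphi_{i_1}\circ\cdots\circ\varphi_{i_n}$; $\|\cdot\|_{\overline U}$ is the sup norm on $\overline U$. Pressure: $P_\Phi(t)=\lim_n\frac1n\log\sum_{\mathbf i\in\Lambda^n}\|\varphi_{\mathbf i}'\|_{\overline U}^t$. Critical exponent: $s_{\mathcal A}=\sup\{t\ge0:\sum_{n\ge1}\sum_{\mathbf i\in\Lambda^n}\|A_{\mathbf i}\|^{-t}=\infty\}$. *)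

theory Defs
  imports "HOL-Analysis.Analysis"
begin

text \<open>RP^1 identified with [0,pi) = R / pi Z.  Reduction of a real number mod pi.\<close>
definition pmod :: "real \<Rightarrow> real" where
  "pmod x = x - pi * of_int \<lfloor>x / pi\<rfloor>"

text \<open>Signed representative in [-pi/2, pi/2] of a difference in R / pi Z.\<close>
definition pwrap :: "real \<Rightarrow> real" where
  "pwrap t = t - pi * of_int (round (t / pi))"

definition pdist :: "real \<Rightarrow> real \<Rightarrow> real" where
  "pdist x y = \<bar>pwrap (x - y)\<bar>"

text \<open>The topology of R / pi Z, carried by [0,pi) (quotient topology via pmod).\<close>
definition circ_top :: "real topology" where
  "circ_top = topology (\<lambda>S. S \<subseteq> {0..<pi} \<and> open {x. pmod x \<in> S})"

definition dirv :: "real \<Rightarrow> real^2" where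
  "dirv \<theta> = vector [cos \<theta>, sin \<theta>]"

definition pangle :: "real^2 \<Rightarrow> real" where
  "pangle v = (THE \<theta>. 0 \<le> \<theta> \<and> \<theta> < pi \<and> (\<exists>r. r \<noteq> 0 \<and> v = r *\<^sub>R dirv \<theta>))"

definition phiA :: "real^2^2 \<Rightarrow> real \<Rightarrow> real" where
  "phiA A \<theta> = pangle (A *v dirv \<theta>)"

definition cderiv :: "(real \<Rightarrow> real) \<Rightarrow> real \<Rightarrow> real" where
  "cderiv f x = (THE D. ((\<lambda>h. pwrap (f (x + h) - f x) / h) \<longlongrightarrow> D) (at 0))"

definition multicone :: "real set \<Rightarrow> bool" where
  "multicone U \<longleftrightarrow> U \<noteq> {} \<and> U \<subset> {0..<pi} \<and> openin circ_top U \<and>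
     finite (connected_components_of (subtopology circ_top U)) \<and>
     pairwise (\<lambda>C D. disjnt (circ_top closure_of C) (circ_top closure_of D))
       (connected_components_of (subtopology circ_top U))"

definition strictly_invariant :: "('i \<Rightarrow> real \<Rightarrow> real) \<Rightarrow> 'i set \<Rightarrow> real set \<Rightarrow> bool" where
  "strictly_invariant \<phi> \<Lambda> U \<longleftrightarrow> (\<forall>i\<in>\<Lambda>. \<phi> i ` (circ_top closure_of U) \<subseteq> U)"

definition words :: "'i set \<Rightarrow> nat \<Rightarrow> 'i list set" where
  "words \<Lambda> n = {is. set is \<subseteq> \<Lambda> \<and> length is = n}"

definition matw :: "('i \<Rightarrow> real^2^2) \<Rightarrow> 'i list \<Rightarrow> real^2^2" where
  "matw A is = foldr (\<lambda>i M. A i ** M) is (mat 1)"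

definition phiw :: "('i \<Rightarrow> real^2^2) \<Rightarrow> 'i list \<Rightarrow> real \<Rightarrow> real" where
  "phiw A is = foldr (\<lambda>i f. phiA (A i) \<circ> f) is id"

definition mnorm :: "real^2^2 \<Rightarrow> real" where
  "mnorm M = onorm (\<lambda>x. M *v x)"

definition dnorm :: "real set \<Rightarrow> (real \<Rightarrow> real) \<Rightarrow> real" where
  "dnorm U f = (SUP x \<in> circ_top closure_of U. \<bar>cderiv f x\<bar>)"

text \<open>The sequence whose limit defines the pressure P_Phi(t).\<close>
definition pressure_seq :: "('i \<Rightarrow> real^2^2) \<Rightarrow> 'i set \<Rightarrow> real set \<Rightarrow> real \<Rightarrow> nat \<Rightarrow> real" where
  "pressure_seq A \<Lambda> U t n = ln (\<Sum>is\<in>words \<Lambda> n. dnorm U (phiw A is) powr t) / real n"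

definition crit_exp :: "('i \<Rightarrow> real^2^2) \<Rightarrow> 'i set \<Rightarrow> real" where
  "crit_exp A \<Lambda> = Sup {t. t \<ge> 0 \<and>
     \<not> summable (\<lambda>n. \<Sum>is\<in>words \<Lambda> (Suc n). mnorm (matw A is) powr (- t))}"

end

theory Submission
  imports Defs
begin

(* For M in SL_2(R) the projective action has derivative 1 / |M e_x|^2, where
  e_x = (cos x, sin x).  Strict invariance of the multicone gives a uniform cone estimate
  kappa * ||A_w|| <= |A_w e_x| for every word w and every x in the closure of U: a direction
  outside U pulled back by A_w^(-1) stays outside U and uniformly transversal to the closure
  of U, and all the vectors A_w e_x are comparable to that pulled-back vector.  Hence |phi_w'|
  is comparable to ||A_w||^(-2) on the closure of U, which gives bounded distortion and, with
  the growth hypothesis, exponential contraction.  The cone estimate also makes the norm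
  quasi-multiplicative, so log sum_w ||A_w||^(-t) is approximately additive in the word
  length; its growth rate P(t) is strictly decreasing and continuous, and its unique zero is
  both the critical exponent and, since P_Phi(s) = P(2 s), twice the zero of the pressure. *)

definition cross2 :: "real^2 \<Rightarrow> real^2 \<Rightarrow> real" where
  "cross2 u v = u$1 * v$2 - u$2 * v$1"

lemma vec2_eq_iff: "(u::real^2) = v \<longleftrightarrow> u$1 = v$1 \<and> u$2 = v$2"
  by (simp add: vec_eq_iff forall_2)

lemma norm_vec2: "norm (v::real^2) = sqrt ((v$1)\<^sup>2 + (v$2)\<^sup>2)"
  by (simp add: norm_vec_def L2_set_def sum_2)

lemma inner_vec2: "(u::real^2) \<bullet> v = u$1 * v$1 + u$2 * v$2"
  by (simp add: inner_vec_def sum_2)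

lemma matrix_vector_mult_vec2_nth [simp]:
  "((M::real^2^2) *v v) $ 1 = M$1$1 * v$1 + M$1$2 * v$2"
  "((M::real^2^2) *v v) $ 2 = M$2$1 * v$1 + M$2$2 * v$2"
  by (simp_all add: matrix_vector_mult_def sum_2)

lemma dirv_nth [simp]: "dirv t $ 1 = cos t" "dirv t $ 2 = sin t"
  by (simp_all add: dirv_def)

lemma norm_dirv [simp]: "norm (dirv t) = 1"
  by (simp add: norm_vec2)

lemma dirv_neq_0 [simp]: "dirv t \<noteq> 0"
  using norm_dirv by (metis norm_zero zero_neq_one)

lemma inner_dirv: "dirv a \<bullet> dirv b = cos (a - b)"
  by (simp add: inner_vec2 cos_diff)

lemma cross2_dirv: "cross2 (dirv a) (dirv b) = sin (b - a)"
  by (simp add: cross2_def sin_diff algebra_simps)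

lemma cross2_scaleR [simp]:
  "cross2 (r *\<^sub>R u) v = r * cross2 u v" "cross2 u (r *\<^sub>R v) = r * cross2 u v"
  by (simp_all add: cross2_def algebra_simps)

lemma cross2_matrix_vector_mult: "cross2 (M *v u) (M *v v) = det M * cross2 u v"
  by (simp add: cross2_def det_2 algebra_simps)

lemma abs_cross2_le: "\<bar>cross2 u v\<bar> \<le> norm u * norm v"
proof -
  have Lagrange: "((u$1)\<^sup>2 + (u$2)\<^sup>2) * ((v$1)\<^sup>2 + (v$2)\<^sup>2) = (cross2 u v)\<^sup>2 + (u \<bullet> v)\<^sup>2"
    unfolding cross2_def inner_vec2 by (simp add: power2_eq_square algebra_simps)
  have "(cross2 u v)\<^sup>2 \<le> ((u$1)\<^sup>2 + (u$2)\<^sup>2) * ((v$1)\<^sup>2 + (v$2)\<^sup>2)"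
    unfolding Lagrange by simp
  hence "\<bar>cross2 u v\<bar> \<le> sqrt (((u$1)\<^sup>2 + (u$2)\<^sup>2) * ((v$1)\<^sup>2 + (v$2)\<^sup>2))"
    by (metis real_sqrt_abs real_sqrt_le_mono)
  thus ?thesis by (simp add: norm_vec2 real_sqrt_mult)
qed

lemma cross2_decomposition:
  assumes "cross2 p q \<noteq> 0"
  shows "(v::real^2) = (cross2 v q / cross2 p q) *\<^sub>R p + (cross2 p v / cross2 p q) *\<^sub>R q"
proof -
  have e: "cross2 p q *\<^sub>R v = cross2 v q *\<^sub>R p + cross2 p v *\<^sub>R q"
    by (simp add: vec2_eq_iff cross2_def algebra_simps)
  have "v = (1 / cross2 p q) *\<^sub>R (cross2 p q *\<^sub>R v)"
    using assms by simp
  thus ?thesis unfolding e by (simp add: scaleR_add_right)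
qed

lemma matrix_vector_mult_neq_0:
  assumes "det (M::real^2^2) \<noteq> 0" "v \<noteq> 0"
  shows "M *v v \<noteq> 0"
proof
  define w :: "real^2" where "w = (\<chi> i. if i = 1 then - v$2 else v$1)"
  assume "M *v v = 0"
  hence "det M * cross2 v w = 0"
    by (metis cross2_matrix_vector_mult cross2_scaleR(1) mult_zero_left scale_zero_left)
  hence "(v$1)\<^sup>2 + (v$2)\<^sup>2 = 0"
    using assms(1) by (simp add: w_def cross2_def power2_eq_square)
  thus False
    using assms(2) by (simp add: vec2_eq_iff sum_power2_eq_zero_iff)
qed

definition adj2 :: "real^2^2 \<Rightarrow> real^2^2" where
  "adj2 M = (\<chi> i j. if i = 1 \<and> j = 1 then M$2$2 else if i = 1 then - M$1$2
      else if j = 1 then - M$2$1 else M$1$1)"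

lemma adj2_nth [simp]:
  "adj2 M $1$1 = M$2$2" "adj2 M $1$2 = - M$1$2" "adj2 M $2$1 = - M$2$1" "adj2 M $2$2 = M$1$1"
  by (simp_all add: adj2_def)

lemma matrix_vector_mult_adj2:
  "M *v (adj2 M *v v) = det M *\<^sub>R v" "adj2 M *v (M *v v) = det M *\<^sub>R v"
  by (simp_all add: vec2_eq_iff det_2 algebra_simps)

lemma matrix_matrix_mult_vec2_nth:
  "((A::real^2^2) ** B) $1$1 = A$1$1 * B$1$1 + A$1$2 * B$2$1"
  "((A::real^2^2) ** B) $1$2 = A$1$1 * B$1$2 + A$1$2 * B$2$2"
  "((A::real^2^2) ** B) $2$1 = A$2$1 * B$1$1 + A$2$2 * B$2$1"
  "((A::real^2^2) ** B) $2$2 = A$2$1 * B$1$2 + A$2$2 * B$2$2"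
  by (simp_all add: matrix_matrix_mult_def sum_2)

lemma adj2_matrix_mult: "adj2 ((A::real^2^2) ** B) = adj2 B ** adj2 A"
  by (simp add: vec_eq_iff forall_2 matrix_matrix_mult_vec2_nth algebra_simps)

lemma adj2_mat1 [simp]: "adj2 (mat 1) = mat 1"
  by (simp add: vec_eq_iff forall_2 mat_def)

section \<open>The angle coordinate on the projective line\<close>

lemma sin_eq_0_imp_eq_0:
  assumes "sin t = 0" "\<bar>t\<bar> < pi"
  shows "t = 0"
proof -
  obtain i :: int where i: "t = of_int i * pi"
    using assms(1) sin_zero_iff_int2 by blast
  hence "\<bar>of_int i :: real\<bar> < 1"
    using assms(2) by (simp add: abs_mult)
  thus ?thesis using i by simp
qed

lemma dirv_parallel_eq:
  assumes "0 \<le> a" "a < pi" "0 \<le> b" "b < pi" "r \<noteq> 0" "r *\<^sub>R dirv a = s *\<^sub>R dirv b"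
  shows "a = b"
proof -
  have "s * sin (b - a) = r * cross2 (dirv a) (dirv a)"
    using arg_cong[OF assms(6), of "cross2 (dirv a)"] by (simp add: cross2_dirv)
  moreover have "s \<noteq> 0"
    using assms(5,6) by (cases "s = 0") auto
  ultimately have "sin (b - a) = 0"
    by (simp add: cross2_def)
  moreover have "\<bar>b - a\<bar> < pi"
    using assms(1-4) by linarith
  ultimately show ?thesis
    using sin_eq_0_imp_eq_0 by fastforce
qed

lemma exists_dirv_parallel:
  assumes "(v::real^2) \<noteq> 0"
  shows "\<exists>t r. 0 \<le> t \<and> t < pi \<and> r \<noteq> 0 \<and> v = r *\<^sub>R dirv t"
proof -
  define \<rho> where "\<rho> = norm v"
  have \<rho>: "\<rho> > 0" "\<rho>\<^sup>2 = (v$1)\<^sup>2 + (v$2)\<^sup>2"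
    using assms by (simp add: \<rho>_def, simp add: \<rho>_def norm_vec2)
  have "(v$1/\<rho>)\<^sup>2 + (v$2/\<rho>)\<^sup>2 = ((v$1)\<^sup>2 + (v$2)\<^sup>2) / \<rho>\<^sup>2"
    by (simp add: power_divide add_divide_distrib)
  also have "\<dots> = 1"
    using \<rho>(1) by (simp flip: \<rho>(2))
  finally have "(v$1/\<rho>)\<^sup>2 + (v$2/\<rho>)\<^sup>2 = 1" .
  then obtain t where t: "0 \<le> t" "t < 2*pi" "v$1/\<rho> = cos t" "v$2/\<rho> = sin t"
    using sincos_total_2pi by metis
  have v: "v = \<rho> *\<^sub>R dirv t"
    using t \<rho> by (simp add: vec2_eq_iff field_simps)
  show ?thesis
  proof (cases "t < pi")
    case True
    thus ?thesis using t \<rho> v by (intro exI[of _ t] exI[of _ \<rho>]) auto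
  next
    case False
    have "v = (-\<rho>) *\<^sub>R dirv (t - pi)"
      using v by (simp add: vec2_eq_iff)
    thus ?thesis using False t \<rho> by (intro exI[of _ "t - pi"] exI[of _ "-\<rho>"]) auto
  qed
qed

lemma pangle:
  assumes "(v::real^2) \<noteq> 0"
  shows "0 \<le> pangle v" "pangle v < pi" "\<exists>r. r \<noteq> 0 \<and> v = r *\<^sub>R dirv (pangle v)"
proof -
  obtain t r where tr: "0 \<le> t" "t < pi" "r \<noteq> 0" "v = r *\<^sub>R dirv t"
    using exists_dirv_parallel[OF assms] by blast
  have "\<exists>!\<theta>. 0 \<le> \<theta> \<and> \<theta> < pi \<and> (\<exists>r. r \<noteq> 0 \<and> v = r *\<^sub>R dirv \<theta>)"
  proof (rule ex1I[of _ t])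
    fix \<theta> assume "0 \<le> \<theta> \<and> \<theta> < pi \<and> (\<exists>r. r \<noteq> 0 \<and> v = r *\<^sub>R dirv \<theta>)"
    thus "\<theta> = t" using tr dirv_parallel_eq[of \<theta> t _ r] by auto
  qed (use tr in blast)
  hence "0 \<le> pangle v \<and> pangle v < pi \<and> (\<exists>r. r \<noteq> 0 \<and> v = r *\<^sub>R dirv (pangle v))"
    unfolding pangle_def by (rule theI')
  thus "0 \<le> pangle v" "pangle v < pi" "\<exists>r. r \<noteq> 0 \<and> v = r *\<^sub>R dirv (pangle v)"
    by auto
qed

lemma pangle_eqI:
  assumes "0 \<le> t" "t < pi" "r \<noteq> 0" "v = r *\<^sub>R dirv t"
  shows "pangle v = t"
proof -
  have "v \<noteq> 0" using assms by simp
  from pangle[OF this] obtain s where "s \<noteq> 0" "v = s *\<^sub>R dirv (pangle v)"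
    by blast
  thus ?thesis
    using assms pangle[OF \<open>v \<noteq> 0\<close>] dirv_parallel_eq[of "pangle v" t s r] by auto
qed

lemma pangle_scaleR:
  assumes "(v::real^2) \<noteq> 0" "c \<noteq> 0"
  shows "pangle (c *\<^sub>R v) = pangle v"
proof -
  obtain r where r: "r \<noteq> 0" "v = r *\<^sub>R dirv (pangle v)"
    using pangle(3)[OF assms(1)] by blast
  hence "c *\<^sub>R v = (c * r) *\<^sub>R dirv (pangle v)"
    by (metis scaleR_scaleR)
  thus ?thesis
    using assms r(1) pangle(1,2)[OF assms(1)] by (intro pangle_eqI) simp_all
qed

lemma pmod_bounds: "0 \<le> pmod x" "pmod x < pi"
proof -
  have "pi * of_int \<lfloor>x / pi\<rfloor> \<le> pi * (x / pi)" "pi * (x / pi) < pi * (of_int \<lfloor>x / pi\<rfloor> + 1)"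
    by (intro mult_left_mono mult_strict_left_mono; simp; linarith)+
  thus "0 \<le> pmod x" "pmod x < pi"
    unfolding pmod_def by (simp_all add: algebra_simps)
qed

lemma pmod_eq_self: "0 \<le> x \<Longrightarrow> x < pi \<Longrightarrow> pmod x = x"
  unfolding pmod_def by (simp add: floor_eq_iff field_simps)

lemma pmod_add_int_pi: "pmod (x + of_int k * pi) = pmod x"
proof -
  have "\<lfloor>(x + of_int k * pi) / pi\<rfloor> = \<lfloor>x / pi\<rfloor> + k"
    by (simp add: add_divide_distrib)
  thus ?thesis unfolding pmod_def by (simp add: algebra_simps)
qed

lemma dirv_diff_int_pi: "\<exists>s. (s = 1 \<or> s = -1) \<and> dirv (x - of_int k * pi) = s *\<^sub>R dirv x"
proof -
  have s0: "sin (of_int k * pi) = 0"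
    using sin_zero_iff_int2 by blast
  hence "cos (of_int k * pi) = 1 \<or> cos (of_int k * pi) = -1"
    using sin_cos_squared_add[of "of_int k * pi"] by (simp add: power2_eq_1_iff)
  thus ?thesis
    using s0 by (intro exI[of _ "cos (of_int k * pi)"]) (auto simp: vec2_eq_iff cos_diff sin_diff)
qed

lemma dirv_pmod: "\<exists>s. (s = 1 \<or> s = -1) \<and> dirv (pmod x) = s *\<^sub>R dirv x"
  unfolding pmod_def using dirv_diff_int_pi[of x "\<lfloor>x / pi\<rfloor>"] by (simp add: mult.commute)

lemma pangle_dirv: "pangle (dirv x) = pmod x"
proof -
  obtain s where s: "s = 1 \<or> s = -1" "dirv (pmod x) = s *\<^sub>R dirv x"
    using dirv_pmod by blast
  hence "dirv x = s *\<^sub>R dirv (pmod x)" by auto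
  thus ?thesis using pmod_bounds s(1) by (intro pangle_eqI[of _ s]) auto
qed

lemma pangle_eq_pmod_if_cross2_eq_0:
  assumes "cross2 v (dirv y) = 0" "v \<noteq> 0"
  shows "pangle v = pmod y"
proof -
  obtain r where r: "r \<noteq> 0" "v = r *\<^sub>R dirv (pangle v)"
    using pangle(3)[OF assms(2)] by blast
  have "r * sin (y - pangle v) = 0"
    using assms(1) r(2) by (metis cross2_dirv cross2_scaleR(1))
  then obtain i :: int where "y = pangle v + of_int i * pi"
    using r(1) sin_zero_iff_int2 by (metis add_diff_cancel_left' diff_add_cancel mult_eq_0_iff)
  thus ?thesis
    using pmod_add_int_pi pmod_eq_self pangle(1,2)[OF assms(2)] by metis
qed

lemma phiA_pmod:
  assumes "det M \<noteq> 0"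
  shows "phiA M (pmod x) = phiA M x"
proof -
  obtain s where s: "s = 1 \<or> s = -1" "dirv (pmod x) = s *\<^sub>R dirv x"
    using dirv_pmod by blast
  hence "M *v dirv (pmod x) = s *\<^sub>R (M *v dirv x)"
    by (simp add: matrix_vector_mult_scaleR)
  thus ?thesis
    unfolding phiA_def using s(1) pangle_scaleR matrix_vector_mult_neq_0[OF assms dirv_neq_0]
    by (metis zero_neq_neg_one zero_neq_one)
qed

lemma openin_circ_top: "openin circ_top S \<longleftrightarrow> S \<subseteq> {0..<pi} \<and> open {x. pmod x \<in> S}"
proof -
  have "istopology (\<lambda>S. S \<subseteq> {0..<pi} \<and> open {x. pmod x \<in> S})"
  proof -
    have "{x. pmod x \<in> S \<inter> T} = {x. pmod x \<in> S} \<inter> {x. pmod x \<in> T}" for S T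
      by auto
    moreover have "{x. pmod x \<in> \<Union>KK} = (\<Union>K\<in>KK. {x. pmod x \<in> K})" for KK
      by auto
    ultimately show ?thesis
      unfolding istopology_def by auto
  qed
  thus ?thesis unfolding circ_top_def by simp
qed

lemma topspace_circ_top: "topspace circ_top = {0..<pi}"
proof -
  have "openin circ_top {0..<pi}"
    unfolding openin_circ_top using pmod_bounds by simp
  thus ?thesis
    using openin_circ_top openin_topspace openin_subset by blast
qed

lemma circ_top_closure_subset: "circ_top closure_of U \<subseteq> {0..<pi}"
  using closure_of_subset_topspace topspace_circ_top by metis

lemma subset_circ_top_closure: "U \<subseteq> {0..<pi} \<Longrightarrow> U \<subseteq> circ_top closure_of U"
  using closure_of_subset topspace_circ_top by metis

lemma closed_pmod_vimage_closure: "closed {x. pmod x \<in> circ_top closure_of U}"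
proof -
  have "openin circ_top ({0..<pi} - circ_top closure_of U)"
    using closedin_closure_of[of circ_top U] by (simp add: closedin_def topspace_circ_top)
  hence "open {x. pmod x \<in> {0..<pi} - circ_top closure_of U}"
    unfolding openin_circ_top by blast
  moreover have "{x. pmod x \<in> {0..<pi} - circ_top closure_of U} = - {x. pmod x \<in> circ_top closure_of U}"
    using pmod_bounds by auto
  ultimately show ?thesis by (simp add: closed_def)
qed

section \<open>The derivative of the projective action\<close>

lemma pwrap_eq_self: "\<bar>t\<bar> < pi/2 \<Longrightarrow> pwrap t = t"
  unfolding pwrap_def by (simp add: round_unique' abs_divide field_simps)

lemma abs_pwrap_le: "\<bar>pwrap t\<bar> \<le> pi/2"
proof -
  have "\<bar>pwrap t\<bar> = \<bar>pi * (t/pi - of_int (round (t/pi)))\<bar>"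
    unfolding pwrap_def by (simp add: right_diff_distrib)
  also have "\<dots> = pi * \<bar>of_int (round (t/pi)) - t/pi\<bar>"
    by (simp add: abs_mult abs_minus_commute)
  also have "\<dots> \<le> pi * (1/2)"
    by (intro mult_left_mono of_int_round_abs_le) simp
  finally show ?thesis by simp
qed

lemma pwrap_sin_cos: "\<exists>\<sigma>. (\<sigma> = 1 \<or> \<sigma> = -1) \<and> cos (pwrap t) = \<sigma> * cos t \<and> sin (pwrap t) = \<sigma> * sin t"
proof -
  obtain \<sigma> where "\<sigma> = 1 \<or> \<sigma> = -1" "dirv (pwrap t) = \<sigma> *\<^sub>R dirv t"
    unfolding pwrap_def using dirv_diff_int_pi by (metis mult.commute)
  thus ?thesis by (auto simp: vec2_eq_iff)
qed

lemma cderiv_eqI: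
  assumes "((\<lambda>h. pwrap (f (x + h) - f x) / h) \<longlongrightarrow> D) (at 0)"
  shows "cderiv f x = D"
  unfolding cderiv_def using assms tendsto_unique[OF trivial_limit_at] by (intro the_equality) auto

lemma cderiv_id: "cderiv id x = 1"
proof (rule cderiv_eqI)
  have "eventually (\<lambda>h::real. \<bar>h\<bar> < pi/2 \<and> h \<noteq> 0) (at 0)"
    by (auto simp: eventually_at intro!: exI[of _ "pi/2"])
  hence "eventually (\<lambda>h. 1 = pwrap (id (x + h) - id x) / h) (at 0)"
    by eventually_elim (simp add: pwrap_eq_self)
  thus "((\<lambda>h. pwrap (id (x + h) - id x) / h) \<longlongrightarrow> 1) (at 0)"
    by (rule Lim_transform_eventually[rotated]) simp
qed

text \<open>For vectors at an acute angle the difference of their angles, wrapped into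
  \<open>[-pi/2, pi/2]\<close>, has nonnegative cosine and is therefore recovered by \<open>arcsin\<close>.\<close>

lemma pwrap_pangle_diff:
  assumes "u0 \<noteq> 0" "u1 \<noteq> 0" "u1 \<bullet> u0 > 0"
  shows "pwrap (pangle u1 - pangle u0) = arcsin (cross2 u0 u1 / (norm u0 * norm u1))"
proof -
  obtain r0 r1 where r0: "r0 \<noteq> 0" "u0 = r0 *\<^sub>R dirv (pangle u0)"
    and r1: "r1 \<noteq> 0" "u1 = r1 *\<^sub>R dirv (pangle u1)"
    using pangle(3) assms(1,2) by metis
  define t where "t = pangle u1 - pangle u0"
  obtain \<sigma> where \<sigma>: "\<sigma> = 1 \<or> \<sigma> = -1" "cos (pwrap t) = \<sigma> * cos t" "sin (pwrap t) = \<sigma> * sin t"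
    using pwrap_sin_cos by blast
  define \<rho> where "\<rho> = \<sigma> / (r0 * r1)"
  have inner_u: "u1 \<bullet> u0 = r1 * r0 * cos t"
    by (subst r0(2), subst r1(2)) (simp add: inner_dirv t_def)
  have cross_u: "cross2 u0 u1 = r0 * r1 * sin t"
    by (subst r0(2), subst r1(2)) (simp add: cross2_dirv t_def)
  have cos_d: "cos (pwrap t) = \<rho> * (u1 \<bullet> u0)" and sin_d: "sin (pwrap t) = \<rho> * cross2 u0 u1"
    unfolding \<sigma>(2,3) inner_u cross_u \<rho>_def using r0 r1 by (simp_all add: field_simps)
  have "cos (pwrap t) \<ge> 0"
    using abs_pwrap_le[of t] by (intro cos_ge_zero) auto
  hence "\<rho> \<ge> 0"
    using cos_d assms(3) by (simp add: zero_le_mult_iff)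
  moreover have "norm u0 = \<bar>r0\<bar>" "norm u1 = \<bar>r1\<bar>"
    using r0(2) r1(2) by (metis norm_scaleR norm_dirv mult.right_neutral)+
  hence "\<bar>\<rho>\<bar> = 1 / (norm u0 * norm u1)"
    using \<sigma>(1) unfolding \<rho>_def by (auto simp: abs_mult)
  ultimately have \<rho>: "\<rho> = 1 / (norm u0 * norm u1)" by simp
  have "pwrap t = arcsin (sin (pwrap t))"
    using abs_pwrap_le[of t] by (intro arcsin_sin[symmetric]) auto
  also have "\<dots> = arcsin (cross2 u0 u1 / (norm u0 * norm u1))"
    unfolding sin_d \<rho> by simp
  finally show ?thesis unfolding t_def .
qed

lemma cderiv_pangle_matrix_vector_mult:
  fixes M :: "real^2^2"
  assumes det: "det M = 1"
  shows "cderiv (\<lambda>y. pangle (M *v dirv y)) x = 1 / (norm (M *v dirv x))\<^sup>2"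
proof (rule cderiv_eqI)
  define N where "N = (\<lambda>y. norm (M *v dirv y))"
  have N_pos: "N y > 0" for y
    unfolding N_def using matrix_vector_mult_neq_0[of M] det by simp
  define \<rho> where "\<rho> = (\<lambda>h. 1 / (N x * N (x + h)))"
  define w where "w = (\<lambda>h. sin h * \<rho> h)"
  have "isCont (\<lambda>h. N (x + h)) 0"
    unfolding N_def norm_vec2 matrix_vector_mult_vec2_nth dirv_nth by (intro continuous_intros)
  hence "isCont \<rho> 0"
    unfolding \<rho>_def using N_pos[of x] N_pos[of "x + 0"] by (intro continuous_intros) auto
  moreover have "((\<lambda>h::real. (sin h - sin 0) / (h - 0)) \<longlongrightarrow> cos 0) (at 0)"
    using DERIV_sin[of "0::real"] unfolding has_field_derivative_iff by simp
  ultimately have "((\<lambda>h. (sin h - sin 0) / (h - 0) * \<rho> h) \<longlongrightarrow> cos 0 * \<rho> 0) (at 0)"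
    unfolding isCont_def by (intro tendsto_mult)
  hence "(w has_field_derivative \<rho> 0) (at 0)"
    unfolding has_field_derivative_iff w_def by simp
  moreover have "(arcsin has_field_derivative 1) (at (w 0))"
    using DERIV_arcsin[of 0] by (simp add: w_def)
  ultimately have "((\<lambda>h. arcsin (w h)) has_field_derivative 1 * \<rho> 0) (at 0)"
    by (rule DERIV_chain2[rotated])
  hence lim: "((\<lambda>h. arcsin (w h) / h) \<longlongrightarrow> 1 / (N x)\<^sup>2) (at 0)"
    unfolding DERIV_def by (simp add: w_def \<rho>_def power2_eq_square)
  have "isCont (\<lambda>h. (M *v dirv (x + h)) \<bullet> (M *v dirv x)) 0"
    unfolding inner_vec2 matrix_vector_mult_vec2_nth dirv_nth by (intro continuous_intros)
  moreover have "(M *v dirv (x + 0)) \<bullet> (M *v dirv x) > 0"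
    using N_pos[of x] by (simp add: N_def flip: power2_norm_eq_inner)
  ultimately have "eventually (\<lambda>h. (M *v dirv (x + h)) \<bullet> (M *v dirv x) > 0) (at 0)"
    unfolding isCont_def by (rule order_tendstoD(1))
  hence "eventually (\<lambda>h. arcsin (w h) / h =
      pwrap (pangle (M *v dirv (x + h)) - pangle (M *v dirv x)) / h) (at 0)"
  proof eventually_elim
    case (elim h)
    have "cross2 (M *v dirv x) (M *v dirv (x + h)) = sin h"
      using det by (simp add: cross2_matrix_vector_mult cross2_dirv)
    thus ?case
      using pwrap_pangle_diff[OF _ _ elim] matrix_vector_mult_neq_0[of M] det
      by (simp add: w_def \<rho>_def N_def)
  qed
  from Lim_transform_eventually[OF lim this]
  show "((\<lambda>h. pwrap (pangle (M *v dirv (x + h)) - pangle (M *v dirv x)) / h)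
      \<longlongrightarrow> 1 / (norm (M *v dirv x))\<^sup>2) (at 0)"
    unfolding N_def .
qed


lemma norm_matrix_vector_mult_le: "norm (M *v v) \<le> mnorm M * norm v"
  unfolding mnorm_def by (rule onorm) simp

lemma mnorm_nonneg: "0 \<le> mnorm (M::real^2^2)"
  unfolding mnorm_def by (rule onorm_pos_le) simp

lemma mnorm_le: "(\<And>v. norm ((M::real^2^2) *v v) \<le> b * norm v) \<Longrightarrow> mnorm M \<le> b"
  unfolding mnorm_def by (rule onorm_le)

lemma mnorm_matrix_mult_le: "mnorm ((M::real^2^2) ** N) \<le> mnorm M * mnorm N"
proof -
  have "(\<lambda>x. (M ** N) *v x) = (\<lambda>x. M *v x) \<circ> (\<lambda>x. N *v x)"
    by (auto simp: matrix_vector_mul_assoc)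
  thus ?thesis
    unfolding mnorm_def using onorm_compose[of "(\<lambda>x. M *v x)" "(\<lambda>x. N *v x)"] by simp
qed

lemma mnorm_mat1_le: "mnorm (mat 1 :: real^2^2) \<le> 1"
  by (rule mnorm_le) simp

lemma norm_matrix_vector_mult_dirv_le: "norm ((M::real^2^2) *v dirv t) \<le> mnorm M"
  using norm_matrix_vector_mult_le[of M "dirv t"] by simp

lemma mnorm_le_two_dirv:
  assumes "sin (b - a) \<noteq> 0"
  shows "mnorm (M::real^2^2) \<le> (norm (M *v dirv a) + norm (M *v dirv b)) / \<bar>sin (b - a)\<bar>"
proof (rule mnorm_le)
  fix v :: "real^2"
  define s where "s = sin (b - a)"
  define \<alpha> \<beta> where "\<alpha> = cross2 v (dirv b) / s" and "\<beta> = cross2 (dirv a) v / s"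
  have v: "v = \<alpha> *\<^sub>R dirv a + \<beta> *\<^sub>R dirv b"
    using cross2_decomposition[of "dirv a" "dirv b" v] assms by (simp add: cross2_dirv \<alpha>_def \<beta>_def s_def)
  have "M *v v = \<alpha> *\<^sub>R (M *v dirv a) + \<beta> *\<^sub>R (M *v dirv b)"
    by (subst v) (simp add: matrix_vector_right_distrib matrix_vector_mult_scaleR)
  hence "norm (M *v v) \<le> \<bar>\<alpha>\<bar> * norm (M *v dirv a) + \<bar>\<beta>\<bar> * norm (M *v dirv b)"
    by (metis norm_scaleR norm_triangle_ineq)
  also have "\<dots> \<le> (norm v / \<bar>s\<bar>) * norm (M *v dirv a) + (norm v / \<bar>s\<bar>) * norm (M *v dirv b)"
    using abs_cross2_le[of v "dirv b"] abs_cross2_le[of "dirv a" v] unfolding \<alpha>_def \<beta>_def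
    by (intro add_mono mult_right_mono) (auto simp: abs_divide divide_right_mono)
  finally show "norm (M *v v) \<le> (norm (M *v dirv a) + norm (M *v dirv b)) / \<bar>sin (b - a)\<bar> * norm v"
    by (simp add: s_def add_divide_distrib algebra_simps)
qed

lemma words_iff: "is \<in> words \<Lambda> n \<longleftrightarrow> set is \<subseteq> \<Lambda> \<and> length is = n"
  by (simp add: words_def)

lemma finite_words: "finite \<Lambda> \<Longrightarrow> finite (words \<Lambda> n)"
  unfolding words_def by (rule finite_lists_length_eq)

lemma words_nonempty: "\<Lambda> \<noteq> {} \<Longrightarrow> words \<Lambda> n \<noteq> {}"
proof -
  assume "\<Lambda> \<noteq> {}"
  then obtain i where "i \<in> \<Lambda>" by blast
  hence "replicate n i \<in> words \<Lambda> n" unfolding words_def by auto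
  thus ?thesis by blast
qed

lemma card_words: "finite \<Lambda> \<Longrightarrow> card (words \<Lambda> n) = card \<Lambda> ^ n"
  unfolding words_def by (rule card_lists_length_eq)

lemma sum_words_add:
  "sum g (words \<Lambda> (n + m)) = (\<Sum>is\<in>words \<Lambda> n. \<Sum>js\<in>words \<Lambda> m. g (is @ js))"
proof -
  have inj: "inj_on (\<lambda>(a, b). a @ b) (words \<Lambda> n \<times> words \<Lambda> m)"
    unfolding words_def by (auto simp: inj_on_def)
  have "(\<lambda>(a, b). a @ b) ` (words \<Lambda> n \<times> words \<Lambda> m) = words \<Lambda> (n + m)"
  proof (intro equalityI subsetI)
    fix xs assume "xs \<in> words \<Lambda> (n + m)"
    hence "(take n xs, drop n xs) \<in> words \<Lambda> n \<times> words \<Lambda> m"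
      unfolding words_def by (auto dest: in_set_takeD in_set_dropD)
    moreover have "xs = (\<lambda>(a, b). a @ b) (take n xs, drop n xs)" by simp
    ultimately show "xs \<in> (\<lambda>(a, b). a @ b) ` (words \<Lambda> n \<times> words \<Lambda> m)" by blast
  qed (auto simp: words_def)
  hence "sum g (words \<Lambda> (n + m)) = sum (g \<circ> (\<lambda>(a, b). a @ b)) (words \<Lambda> n \<times> words \<Lambda> m)"
    using sum.reindex[OF inj, of g] by simp
  also have "\<dots> = (\<Sum>(a, b)\<in>words \<Lambda> n \<times> words \<Lambda> m. g (a @ b))"
    by (rule sum.cong) auto
  finally show ?thesis by (simp add: sum.cartesian_product)
qed

lemma matw_Nil [simp]: "matw A [] = mat 1"
  and matw_Cons [simp]: "matw A (i # is) = A i ** matw A is"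
  by (simp_all add: matw_def)

lemma matw_append: "matw A (is @ js) = matw A is ** matw A js"
  by (induction "is") (simp_all add: matrix_mul_assoc)

lemma phiw_Nil [simp]: "phiw A [] = id"
  and phiw_Cons [simp]: "phiw A (i # is) = phiA (A i) \<circ> phiw A is"
  by (simp_all add: phiw_def)

lemma det_matw: "set is \<subseteq> \<Lambda> \<Longrightarrow> \<forall>i\<in>\<Lambda>. det (A i) = 1 \<Longrightarrow> det (matw A is) = 1"
  by (induction "is") (auto simp: det_mul)

lemma phiw_eq_pangle:
  assumes "set is \<subseteq> \<Lambda>" "\<forall>i\<in>\<Lambda>. det (A i) = 1" "is \<noteq> []"
  shows "phiw A is y = pangle (matw A is *v dirv y)"
  using assms
proof (induction "is")
  case (Cons i js)
  show ?case
  proof (cases "js = []")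
    case True thus ?thesis by (simp add: phiA_def)
  next
    case False
    define v where "v = matw A js *v dirv y"
    have "det (A i) = 1" "det (matw A js) = 1"
      using Cons.prems det_matw[of js \<Lambda> A] by auto
    hence v: "v \<noteq> 0" "A i *v v \<noteq> 0"
      unfolding v_def using matrix_vector_mult_neq_0 by (metis dirv_neq_0 zero_neq_one)+
    obtain r where r: "r \<noteq> 0" "v = r *\<^sub>R dirv (pangle v)"
      using pangle(3)[OF v(1)] by blast
    hence "A i *v v = r *\<^sub>R (A i *v dirv (pangle v))"
      by (metis matrix_vector_mult_scaleR)
    hence "A i *v dirv (pangle v) = (1/r) *\<^sub>R (A i *v v)"
      using r(1) by simp
    hence "pangle (A i *v dirv (pangle v)) = pangle (A i *v v)"
      using pangle_scaleR[OF v(2)] r(1) by simp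
    thus ?thesis
      using Cons False by (simp add: phiA_def v_def matrix_vector_mul_assoc)
  qed
qed simp

lemma cderiv_phiw:
  assumes "set is \<subseteq> \<Lambda>" "\<forall>i\<in>\<Lambda>. det (A i) = 1"
  shows "cderiv (phiw A is) x = 1 / (norm (matw A is *v dirv x))\<^sup>2"
proof (cases "is = []")
  case False
  hence "phiw A is = (\<lambda>y. pangle (matw A is *v dirv y))"
    using phiw_eq_pangle[OF assms] by blast
  thus ?thesis using cderiv_pangle_matrix_vector_mult[OF det_matw[OF assms]] by simp
qed (simp add: cderiv_id)


section \<open>The cone estimate\<close>

lemma compact_positive_lower_bound:
  assumes "compact S" "continuous_on S F" "\<And>p. p \<in> S \<Longrightarrow> F p > (0::real)"
  shows "\<exists>\<delta>>0. \<forall>p\<in>S. \<delta> \<le> F p"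
proof (cases "S = {}")
  case False
  then obtain p0 where "p0 \<in> S" "\<forall>p\<in>S. F p0 \<le> F p"
    using continuous_attains_inf[OF assms(1) False assms(2)] by blast
  thus ?thesis using assms(3) by blast
qed (auto intro: exI[of _ 1])

lemma finite_uniform_positive:
  assumes "finite \<Lambda>" "\<And>i. i \<in> \<Lambda> \<Longrightarrow> \<exists>\<delta>>0. P i \<delta>"
    and "\<And>i \<delta> \<delta>'. P i \<delta>' \<Longrightarrow> 0 < \<delta> \<Longrightarrow> \<delta> \<le> \<delta>' \<Longrightarrow> P i \<delta>"
  shows "\<exists>\<delta>>(0::real). \<forall>i\<in>\<Lambda>. P i \<delta>"
proof -
  obtain f where f: "\<And>i. i \<in> \<Lambda> \<Longrightarrow> f i > 0 \<and> P i (f i)"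
    using assms(2) by metis
  define \<delta> where "\<delta> = Min (insert 1 (f ` \<Lambda>))"
  have "\<delta> > 0" "\<And>i. i \<in> \<Lambda> \<Longrightarrow> \<delta> \<le> f i"
    using assms(1) f by (auto simp: \<delta>_def)
  thus ?thesis using assms(3) f by blast
qed

locale multicone_ifs =
  fixes A :: "'i \<Rightarrow> real^2^2" and \<Lambda> :: "'i set" and U :: "real set"
  assumes finite_alphabet: "finite \<Lambda>" and alphabet_nonempty: "\<Lambda> \<noteq> {}"
    and det_A: "\<And>i. i \<in> \<Lambda> \<Longrightarrow> det (A i) = 1"
    and multicone: "multicone U"
    and invariant: "strictly_invariant (\<lambda>i. phiA (A i)) \<Lambda> U"
begin

definition Ubar where "Ubar = circ_top closure_of U"

lemma U_subset: "U \<subseteq> {0..<pi}"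
  and U_nonempty: "U \<noteq> {}"
  and open_pmod_vimage_U: "open {x. pmod x \<in> U}"
  and exists_outside_U: "\<exists>w. 0 \<le> w \<and> w < pi \<and> w \<notin> U"
  using multicone unfolding multicone_def openin_circ_top by auto

lemma Ubar_subset: "Ubar \<subseteq> {0..<pi}"
  unfolding Ubar_def by (rule circ_top_closure_subset)

lemma U_subset_Ubar: "U \<subseteq> Ubar"
  unfolding Ubar_def using subset_circ_top_closure U_subset by blast

lemma Ubar_nonempty: "Ubar \<noteq> {}"
  using U_nonempty U_subset_Ubar by blast

lemma phiA_Ubar: "i \<in> \<Lambda> \<Longrightarrow> x \<in> Ubar \<Longrightarrow> phiA (A i) x \<in> U"
  using invariant unfolding strictly_invariant_def Ubar_def by blast

lemma det_matw_word: "set is \<subseteq> \<Lambda> \<Longrightarrow> det (matw A is) = 1"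
  using det_matw det_A by blast

lemma norm_matw_dirv_pos: "set is \<subseteq> \<Lambda> \<Longrightarrow> norm (matw A is *v dirv x) > 0"
  using matrix_vector_mult_neq_0 det_matw_word by (metis dirv_neq_0 zero_less_norm_iff zero_neq_one)

lemma exists_transversal_pair: "\<exists>p q. p \<in> Ubar \<and> q \<in> Ubar \<and> sin (q - p) \<noteq> 0"
proof -
  obtain p where p: "p \<in> U" using U_nonempty by blast
  hence p_range: "0 \<le> p" "p < pi" using U_subset by auto
  hence "p \<in> {x. pmod x \<in> U}" using p pmod_eq_self by simp
  then obtain \<epsilon> where \<epsilon>: "\<epsilon> > 0" "ball p \<epsilon> \<subseteq> {x. pmod x \<in> U}"
    using open_pmod_vimage_U open_contains_ball by blast
  obtain e where e: "0 < e" "e < \<epsilon>" "p + e < pi"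
    using \<epsilon>(1) p_range by (intro that[of "min \<epsilon> (pi - p) / 2"]) (auto simp: min_def field_simps)
  have "p + e \<in> ball p \<epsilon>"
    using e by (simp add: dist_real_def)
  hence "pmod (p + e) \<in> U"
    using \<epsilon>(2) by auto
  moreover have "pmod (p + e) = p + e"
    using e p_range by (intro pmod_eq_self) auto
  moreover have "sin ((p + e) - p) \<noteq> 0"
    using e p_range by (simp add: sin_gt_zero less_imp_neq[symmetric])
  ultimately show ?thesis using p U_subset_Ubar by (metis subsetD)
qed

lemma matw_dirv_Ubar:
  assumes "set is \<subseteq> \<Lambda>" "x \<in> Ubar"
  shows "\<exists>r x'. r \<noteq> 0 \<and> x' \<in> Ubar \<and> matw A is *v dirv x = r *\<^sub>R dirv x'"
  using assms(1)
proof (induction "is")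
  case Nil thus ?case using assms(2) by (intro exI[of _ 1] exI[of _ x]) auto
next
  case (Cons i js)
  then obtain r x' where rx: "r \<noteq> 0" "x' \<in> Ubar" "matw A js *v dirv x = r *\<^sub>R dirv x'"
    by auto
  have i: "i \<in> \<Lambda>" using Cons.prems by auto
  have "A i *v dirv x' \<noteq> 0"
    using matrix_vector_mult_neq_0 det_A[OF i] by (metis dirv_neq_0 zero_neq_one)
  then obtain s where s: "s \<noteq> 0" "A i *v dirv x' = s *\<^sub>R dirv (phiA (A i) x')"
    using pangle(3) unfolding phiA_def by blast
  have "matw A (i # js) *v dirv x = (r * s) *\<^sub>R dirv (phiA (A i) x')"
    using rx(3) s(2) by (simp add: matrix_vector_mul_assoc[symmetric] matrix_vector_mult_scaleR)
  moreover have "phiA (A i) x' \<in> Ubar"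
    using phiA_Ubar[OF i rx(2)] U_subset_Ubar by blast
  ultimately show ?case using rx(1) s(1) by (intro exI[of _ "r * s"] exI) auto
qed

text \<open>Each generator maps the closure of \<open>U\<close> into the open set \<open>U\<close>, so by compactness its
  image directions stay uniformly transversal to the directions outside \<open>U\<close>.\<close>

lemma separation_single:
  assumes det: "det B = 1" and BU: "\<forall>x\<in>Ubar. phiA B x \<in> U"
  shows "\<exists>\<delta>>0. \<forall>x\<in>Ubar. \<forall>y. 0 \<le> y \<and> y < pi \<and> y \<notin> U \<longrightarrow>
    \<delta> * norm (B *v dirv x) \<le> \<bar>cross2 (B *v dirv x) (dirv y)\<bar>"
proof -
  define S where "S = ({0..pi} \<inter> {x. pmod x \<in> Ubar}) \<times> ({0..pi} \<inter> - {x. pmod x \<in> U})"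
  define F where "F = (\<lambda>p. \<bar>cross2 (B *v dirv (fst p)) (dirv (snd p))\<bar> / norm (B *v dirv (fst p)))"
  have "B *v dirv x \<noteq> 0" for x
    using matrix_vector_mult_neq_0[of B] det by simp
  hence npos: "norm (B *v dirv x) > 0" for x
    by simp
  have "compact S"
    unfolding S_def Ubar_def using open_pmod_vimage_U
    by (intro compact_Times compact_Int_closed compact_Icc closed_pmod_vimage_closure) auto
  moreover have "continuous_on S F"
    using npos[THEN less_imp_neq, symmetric, unfolded norm_vec2 matrix_vector_mult_vec2_nth dirv_nth]
    unfolding F_def cross2_def norm_vec2 matrix_vector_mult_vec2_nth dirv_nth
    by (intro continuous_intros) auto
  moreover have "F p > 0" if "p \<in> S" for p
  proof -
    obtain x y where p: "p = (x, y)" by (cases p)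
    hence xy: "pmod x \<in> Ubar" "pmod y \<notin> U"
      using that unfolding S_def by auto
    have "cross2 (B *v dirv x) (dirv y) \<noteq> 0"
    proof
      assume "cross2 (B *v dirv x) (dirv y) = 0"
      hence "pmod y = phiA B x"
        unfolding phiA_def using pangle_eq_pmod_if_cross2_eq_0 npos[of x] by force
      thus False using BU xy phiA_pmod[of B x] det by auto
    qed
    thus ?thesis unfolding p F_def using npos[of x] by simp
  qed
  ultimately obtain \<delta> where \<delta>: "\<delta> > 0" "\<forall>p\<in>S. \<delta> \<le> F p"
    using compact_positive_lower_bound by blast
  have "\<delta> * norm (B *v dirv x) \<le> \<bar>cross2 (B *v dirv x) (dirv y)\<bar>"
    if "x \<in> Ubar" "0 \<le> y" "y < pi" "y \<notin> U" for x y
  proof -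
    have "0 \<le> x" "x < pi" using that(1) Ubar_subset by auto
    hence "(x, y) \<in> S" unfolding S_def using that pmod_eq_self by auto
    thus ?thesis using \<delta>(2) npos[of x] unfolding F_def by (auto simp: field_simps)
  qed
  thus ?thesis using \<delta>(1) by blast
qed

lemma uniform_separation:
  "\<exists>\<delta>>0. \<forall>i\<in>\<Lambda>. \<forall>x\<in>Ubar. \<forall>y. 0 \<le> y \<and> y < pi \<and> y \<notin> U \<longrightarrow>
     \<delta> * norm (A i *v dirv x) \<le> \<bar>cross2 (A i *v dirv x) (dirv y)\<bar>"
proof (rule finite_uniform_positive[OF finite_alphabet])
  fix i assume "i \<in> \<Lambda>"
  thus "\<exists>\<delta>>0. \<forall>x\<in>Ubar. \<forall>y. 0 \<le> y \<and> y < pi \<and> y \<notin> U \<longrightarrow>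
     \<delta> * norm (A i *v dirv x) \<le> \<bar>cross2 (A i *v dirv x) (dirv y)\<bar>"
    using separation_single det_A phiA_Ubar by blast
next
  fix i and \<delta> \<delta>' :: real
  assume "\<forall>x\<in>Ubar. \<forall>y. 0 \<le> y \<and> y < pi \<and> y \<notin> U \<longrightarrow>
     \<delta>' * norm (A i *v dirv x) \<le> \<bar>cross2 (A i *v dirv x) (dirv y)\<bar>" "0 < \<delta>" "\<delta> \<le> \<delta>'"
  thus "\<forall>x\<in>Ubar. \<forall>y. 0 \<le> y \<and> y < pi \<and> y \<notin> U \<longrightarrow>
     \<delta> * norm (A i *v dirv x) \<le> \<bar>cross2 (A i *v dirv x) (dirv y)\<bar>"
    by (meson mult_right_mono norm_ge_zero order_trans)
qed

definition adj_bound where "adj_bound = 1 + (\<Sum>i\<in>\<Lambda>. mnorm (adj2 (A i)))"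

lemma adj_bound_ge_1: "adj_bound \<ge> 1"
  unfolding adj_bound_def by (simp add: sum_nonneg mnorm_nonneg)

lemma mnorm_adj2_le: "i \<in> \<Lambda> \<Longrightarrow> mnorm (adj2 (A i)) \<le> adj_bound"
  unfolding adj_bound_def using finite_alphabet
  by (smt (verit) member_le_sum mnorm_nonneg)

context
  fixes \<delta> :: real
  assumes separation_pos: "\<delta> > 0"
    and separation: "\<And>i x y. i \<in> \<Lambda> \<Longrightarrow> x \<in> Ubar \<Longrightarrow> 0 \<le> y \<Longrightarrow> y < pi \<Longrightarrow> y \<notin> U \<Longrightarrow>
      \<delta> * norm (A i *v dirv x) \<le> \<bar>cross2 (A i *v dirv x) (dirv y)\<bar>"
begin

lemma adj2_transversal:
  assumes i: "i \<in> \<Lambda>" and \<eta>: "\<eta> \<noteq> 0" "pangle \<eta> \<notin> U" and x: "x \<in> Ubar"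
  shows "\<delta> / adj_bound\<^sup>2 * norm (adj2 (A i) *v \<eta>) \<le> \<bar>cross2 (dirv x) (adj2 (A i) *v \<eta>)\<bar>"
proof -
  define \<zeta> where "\<zeta> = adj2 (A i) *v \<eta>"
  have det: "det (A i) = 1" using det_A[OF i] .
  obtain r where r: "r \<noteq> 0" "\<eta> = r *\<^sub>R dirv (pangle \<eta>)"
    using pangle(3)[OF \<eta>(1)] by blast
  have "norm \<zeta> \<le> mnorm (adj2 (A i)) * norm \<eta>"
    unfolding \<zeta>_def by (rule norm_matrix_vector_mult_le)
  also have "\<dots> \<le> adj_bound * \<bar>r\<bar>"
    using mnorm_adj2_le[OF i] by (subst r(2)) (simp add: mult_right_mono)
  finally have norm_\<zeta>: "norm \<zeta> \<le> adj_bound * \<bar>r\<bar>" .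
  have "1 = norm (adj2 (A i) *v (A i *v dirv x))"
    using det by (simp add: matrix_vector_mult_adj2)
  also have "\<dots> \<le> adj_bound * norm (A i *v dirv x)"
    using mnorm_adj2_le[OF i] norm_matrix_vector_mult_le[of "adj2 (A i)"]
    by (meson mult_right_mono norm_ge_zero order_trans)
  finally have norm_Ax: "1 \<le> adj_bound * norm (A i *v dirv x)" .
  have "\<delta> / adj_bound\<^sup>2 * norm \<zeta> \<le> \<delta> * \<bar>r\<bar> / adj_bound"
    using norm_\<zeta> separation_pos adj_bound_ge_1
    by (simp add: power2_eq_square field_simps mult_left_mono)
  also have "\<dots> \<le> \<bar>r\<bar> * (\<delta> * norm (A i *v dirv x))"
    using mult_left_mono[OF norm_Ax, of "\<delta> * \<bar>r\<bar>"] separation_pos adj_bound_ge_1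
    by (simp add: field_simps)
  also have "\<dots> \<le> \<bar>r\<bar> * \<bar>cross2 (A i *v dirv x) (dirv (pangle \<eta>))\<bar>"
    using separation[OF i x pangle(1,2)[OF \<eta>(1)] \<eta>(2)] by (simp add: mult_left_mono)
  also have "\<dots> = \<bar>cross2 (A i *v dirv x) \<eta>\<bar>"
    using r(2) by (metis abs_mult cross2_scaleR(2))
  also have "\<dots> = \<bar>cross2 (dirv x) \<zeta>\<bar>"
    using cross2_matrix_vector_mult[of "A i" "dirv x" \<zeta>] det
    by (simp add: \<zeta>_def matrix_vector_mult_adj2)
  finally show ?thesis unfolding \<zeta>_def .
qed

lemma adj2_outside_U:
  assumes i: "i \<in> \<Lambda>" and \<eta>: "\<eta> \<noteq> 0" "pangle \<eta> \<notin> U"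
  shows "adj2 (A i) *v \<eta> \<noteq> 0" "pangle (adj2 (A i) *v \<eta>) \<notin> U"
proof -
  define \<zeta> where "\<zeta> = adj2 (A i) *v \<eta>"
  have "A i *v \<zeta> = \<eta>" using det_A[OF i] by (simp add: \<zeta>_def matrix_vector_mult_adj2)
  thus \<zeta>: "adj2 (A i) *v \<eta> \<noteq> 0" using \<eta>(1) \<zeta>_def by auto
  show "pangle (adj2 (A i) *v \<eta>) \<notin> U"
  proof
    assume "pangle (adj2 (A i) *v \<eta>) \<in> U"
    moreover obtain r where "\<zeta> = r *\<^sub>R dirv (pangle \<zeta>)"
      using pangle(3)[OF \<zeta>] \<zeta>_def by blast
    hence "cross2 (dirv (pangle \<zeta>)) \<zeta> = 0"
      by (metis cross2_dirv cross2_scaleR(2) diff_self mult_zero_right sin_zero)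
    ultimately have "\<delta> / adj_bound\<^sup>2 * norm \<zeta> \<le> 0"
      using adj2_transversal[OF i \<eta>] U_subset_Ubar \<zeta>_def by fastforce
    moreover have "0 < \<delta> / adj_bound\<^sup>2 * norm \<zeta>"
      using separation_pos adj_bound_ge_1 \<zeta> \<zeta>_def by (intro mult_pos_pos divide_pos_pos) auto
    ultimately show False by linarith
  qed
qed

lemma adj2_matw_transversal:
  assumes "set js \<subseteq> \<Lambda>" "\<eta> \<noteq> 0" "pangle \<eta> \<notin> U"
  shows "adj2 (matw A js) *v \<eta> \<noteq> 0 \<and> pangle (adj2 (matw A js) *v \<eta>) \<notin> U \<and>
    (js \<noteq> [] \<longrightarrow> (\<forall>x\<in>Ubar. \<delta> / adj_bound\<^sup>2 * norm (adj2 (matw A js) *v \<eta>)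
        \<le> \<bar>cross2 (dirv x) (adj2 (matw A js) *v \<eta>)\<bar>))"
  using assms
proof (induction js arbitrary: \<eta>)
  case (Cons j js)
  have j: "j \<in> \<Lambda>" using Cons.prems by auto
  define \<eta>' where "\<eta>' = adj2 (A j) *v \<eta>"
  have \<eta>': "\<eta>' \<noteq> 0" "pangle \<eta>' \<notin> U"
    "\<forall>x\<in>Ubar. \<delta> / adj_bound\<^sup>2 * norm \<eta>' \<le> \<bar>cross2 (dirv x) \<eta>'\<bar>"
    unfolding \<eta>'_def using adj2_outside_U adj2_transversal j Cons.prems by auto
  have "adj2 (matw A (j # js)) *v \<eta> = adj2 (matw A js) *v \<eta>'"
    unfolding \<eta>'_def by (simp add: adj2_matrix_mult matrix_vector_mul_assoc)
  thus ?case using Cons.IH[OF _ \<eta>'(1,2)] Cons.prems(1) \<eta>'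
    by (cases "js = []") (simp_all add: matrix_vector_mul_lid)
qed (simp add: matrix_vector_mul_lid)

lemma matw_dirv_comparable:
  assumes "set is \<subseteq> \<Lambda>" "is \<noteq> []"
  shows "\<exists>z>0. \<forall>x\<in>Ubar. \<delta> / adj_bound\<^sup>2 * z \<le> norm (matw A is *v dirv x) \<and>
    norm (matw A is *v dirv x) \<le> z / \<delta>"
proof -
  obtain w where w: "0 \<le> w" "w < pi" "w \<notin> U" using exists_outside_U by blast
  define M where "M = matw A is"
  define \<zeta> where "\<zeta> = adj2 M *v dirv w"
  have M\<zeta>: "M *v \<zeta> = dirv w"
    unfolding \<zeta>_def M_def using det_matw_word[OF assms(1)] by (simp add: matrix_vector_mult_adj2)
  have \<zeta>: "\<zeta> \<noteq> 0" "\<forall>x\<in>Ubar. \<delta> / adj_bound\<^sup>2 * norm \<zeta> \<le> \<bar>cross2 (dirv x) \<zeta>\<bar>"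
    using adj2_matw_transversal[OF assms(1) dirv_neq_0, of w] pangle_dirv pmod_eq_self w assms(2)
    unfolding \<zeta>_def M_def by auto
  have cross_\<zeta>: "cross2 (dirv x) \<zeta> = cross2 (M *v dirv x) (dirv w)" for x
    using cross2_matrix_vector_mult[of M "dirv x" \<zeta>] det_matw_word[OF assms(1)] M\<zeta>
    by (simp add: M_def)
  obtain i js where ijs: "is = i # js" using assms(2) by (cases "is") auto
  have i: "i \<in> \<Lambda>" and js: "set js \<subseteq> \<Lambda>" using assms(1) ijs by auto
  show ?thesis
  proof (intro exI[of _ "norm \<zeta>"] conjI ballI)
    show "norm \<zeta> > 0" using \<zeta>(1) by simp
    fix x assume x: "x \<in> Ubar"
    show "\<delta> / adj_bound\<^sup>2 * norm \<zeta> \<le> norm (matw A is *v dirv x)"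
      using \<zeta>(2) x abs_cross2_le[of "M *v dirv x" "dirv w"] cross_\<zeta>[of x] unfolding M_def
      by fastforce
    obtain r x' where rx: "r \<noteq> 0" "x' \<in> Ubar" "matw A js *v dirv x = r *\<^sub>R dirv x'"
      using matw_dirv_Ubar[OF js x] by blast
    have Mx: "M *v dirv x = r *\<^sub>R (A i *v dirv x')"
      unfolding M_def ijs using rx(3)
      by (simp add: matrix_vector_mul_assoc[symmetric] matrix_vector_mult_scaleR)
    have "\<delta> * norm (M *v dirv x) = \<bar>r\<bar> * (\<delta> * norm (A i *v dirv x'))"
      unfolding Mx by simp
    also have "\<dots> \<le> \<bar>r\<bar> * \<bar>cross2 (A i *v dirv x') (dirv w)\<bar>"
      using separation[OF i rx(2) w] by (simp add: mult_left_mono)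
    also have "\<dots> = \<bar>cross2 (dirv x) \<zeta>\<bar>"
      unfolding cross_\<zeta> Mx by (simp add: abs_mult)
    also have "\<dots> \<le> norm \<zeta>"
      using abs_cross2_le[of "dirv x" \<zeta>] by simp
    finally show "norm (matw A is *v dirv x) \<le> norm \<zeta> / \<delta>"
      unfolding M_def using separation_pos by (simp add: field_simps)
  qed
qed

lemma cone_constant:
  "\<exists>\<kappa>>0. \<kappa> \<le> 1 \<and> (\<forall>is. set is \<subseteq> \<Lambda> \<longrightarrow>
     (\<forall>x\<in>Ubar. \<kappa> * mnorm (matw A is) \<le> norm (matw A is *v dirv x)))"
proof -
  obtain p q where pq: "p \<in> Ubar" "q \<in> Ubar" "sin (q - p) \<noteq> 0"
    using exists_transversal_pair by blast
  define s where "s = \<bar>sin (q - p)\<bar>"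
  have s: "s > 0" "s \<le> 1" unfolding s_def using pq(3) by auto
  define \<kappa> where "\<kappa> = min 1 (\<delta> / adj_bound\<^sup>2 * \<delta> * s / 2)"
  have \<kappa>: "\<kappa> > 0" "\<kappa> \<le> 1"
    unfolding \<kappa>_def using separation_pos adj_bound_ge_1 s by auto
  have "\<kappa> * mnorm (matw A is) \<le> norm (matw A is *v dirv x)"
    if w: "set is \<subseteq> \<Lambda>" and x: "x \<in> Ubar" for "is" x
  proof (cases "is = []")
    case True
    thus ?thesis using \<kappa> mnorm_mat1_le mnorm_nonneg by (simp add: mult_le_one)
  next
    case False
    define M where "M = matw A is"
    obtain z where z: "z > 0" "\<forall>x\<in>Ubar. \<delta> / adj_bound\<^sup>2 * z \<le> norm (M *v dirv x) \<and>
        norm (M *v dirv x) \<le> z / \<delta>"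
      using matw_dirv_comparable[OF w False] unfolding M_def by blast
    have "mnorm M \<le> (norm (M *v dirv p) + norm (M *v dirv q)) / s"
      unfolding s_def by (rule mnorm_le_two_dirv[OF pq(3)])
    also have "\<dots> \<le> (z / \<delta> + z / \<delta>) / s"
      using z(2) pq(1,2) s(1) by (intro divide_right_mono add_mono) auto
    finally have "mnorm M \<le> 2 * z / (\<delta> * s)" by (simp add: field_simps)
    hence "\<kappa> * mnorm M \<le> (\<delta> / adj_bound\<^sup>2 * \<delta> * s / 2) * (2 * z / (\<delta> * s))"
      unfolding \<kappa>_def using mnorm_nonneg[of M] separation_pos s adj_bound_ge_1
      by (intro mult_mono) auto
    also have "\<dots> = \<delta> / adj_bound\<^sup>2 * z"
      using separation_pos s(1) by (simp add: field_simps)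
    also have "\<dots> \<le> norm (M *v dirv x)" using z(2) x by blast
    finally show ?thesis unfolding M_def .
  qed
  thus ?thesis using \<kappa> by blast
qed

end

definition kappa where
  "kappa = (SOME \<kappa>. \<kappa> > 0 \<and> \<kappa> \<le> 1 \<and> (\<forall>is. set is \<subseteq> \<Lambda> \<longrightarrow>
     (\<forall>x\<in>Ubar. \<kappa> * mnorm (matw A is) \<le> norm (matw A is *v dirv x))))"

lemma kappa_pos: "kappa > 0"
  and kappa_le_1: "kappa \<le> 1"
  and kappa_le_norm_matw_dirv:
    "set is \<subseteq> \<Lambda> \<Longrightarrow> x \<in> Ubar \<Longrightarrow> kappa * mnorm (matw A is) \<le> norm (matw A is *v dirv x)"
proof -
  have "\<exists>\<kappa>>0. \<kappa> \<le> 1 \<and> (\<forall>is. set is \<subseteq> \<Lambda> \<longrightarrow>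
     (\<forall>x\<in>Ubar. \<kappa> * mnorm (matw A is) \<le> norm (matw A is *v dirv x)))"
    using uniform_separation cone_constant by blast
  from someI_ex[OF this, folded kappa_def]
  show "kappa > 0" "kappa \<le> 1"
    "set is \<subseteq> \<Lambda> \<Longrightarrow> x \<in> Ubar \<Longrightarrow> kappa * mnorm (matw A is) \<le> norm (matw A is *v dirv x)"
    by auto
qed


lemma mnorm_matw_pos: "set is \<subseteq> \<Lambda> \<Longrightarrow> mnorm (matw A is) > 0"
  using norm_matw_dirv_pos norm_matrix_vector_mult_dirv_le by (meson less_le_trans)

lemma abs_cderiv_phiw:
  "set is \<subseteq> \<Lambda> \<Longrightarrow> \<bar>cderiv (phiw A is) x\<bar> = 1 / (norm (matw A is *v dirv x))\<^sup>2"
  using cderiv_phiw[of "is" \<Lambda> A x] det_A by simp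

lemma abs_cderiv_phiw_bounds:
  assumes "set is \<subseteq> \<Lambda>" "x \<in> Ubar"
  shows "1 / (mnorm (matw A is))\<^sup>2 \<le> \<bar>cderiv (phiw A is) x\<bar>"
    "\<bar>cderiv (phiw A is) x\<bar> \<le> 1 / (kappa\<^sup>2 * (mnorm (matw A is))\<^sup>2)"
proof -
  define m where "m = mnorm (matw A is)"
  define N where "N = norm (matw A is *v dirv x)"
  have N: "kappa * m \<le> N" "N \<le> m"
    unfolding m_def N_def
    using kappa_le_norm_matw_dirv[OF assms] norm_matrix_vector_mult_dirv_le by auto
  have "kappa * m > 0"
    using kappa_pos mnorm_matw_pos[OF assms(1)] unfolding m_def by simp
  hence "1 / m\<^sup>2 \<le> 1 / N\<^sup>2" "1 / N\<^sup>2 \<le> 1 / (kappa * m)\<^sup>2"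
    using N by (auto intro!: divide_left_mono power_mono mult_pos_pos)
  thus "1 / (mnorm (matw A is))\<^sup>2 \<le> \<bar>cderiv (phiw A is) x\<bar>"
    "\<bar>cderiv (phiw A is) x\<bar> \<le> 1 / (kappa\<^sup>2 * (mnorm (matw A is))\<^sup>2)"
    unfolding abs_cderiv_phiw[OF assms(1)] m_def N_def by (simp_all add: power_mult_distrib)
qed

lemma dnorm_phiw_bounds:
  assumes "set is \<subseteq> \<Lambda>"
  shows "1 / (mnorm (matw A is))\<^sup>2 \<le> dnorm U (phiw A is)"
    "dnorm U (phiw A is) \<le> 1 / (kappa\<^sup>2 * (mnorm (matw A is))\<^sup>2)"
proof -
  have d: "dnorm U (phiw A is) = (SUP x\<in>Ubar. \<bar>cderiv (phiw A is) x\<bar>)"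
    unfolding dnorm_def Ubar_def ..
  show "dnorm U (phiw A is) \<le> 1 / (kappa\<^sup>2 * (mnorm (matw A is))\<^sup>2)"
    unfolding d using abs_cderiv_phiw_bounds(2)[OF assms] Ubar_nonempty by (intro cSUP_least) auto
  obtain x where x: "x \<in> Ubar" using Ubar_nonempty by blast
  have "bdd_above ((\<lambda>x. \<bar>cderiv (phiw A is) x\<bar>) ` Ubar)"
    using abs_cderiv_phiw_bounds(2)[OF assms] by (intro bdd_aboveI2) blast
  thus "1 / (mnorm (matw A is))\<^sup>2 \<le> dnorm U (phiw A is)"
    unfolding d using abs_cderiv_phiw_bounds(1)[OF assms x] x by (intro cSUP_upper2) auto
qed

lemma cderiv_phiw_ratio_bounds:
  assumes "set is \<subseteq> \<Lambda>" "x \<in> Ubar" "y \<in> Ubar"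
  shows "kappa\<^sup>2 \<le> \<bar>cderiv (phiw A is) x\<bar> / \<bar>cderiv (phiw A is) y\<bar>"
    "\<bar>cderiv (phiw A is) x\<bar> / \<bar>cderiv (phiw A is) y\<bar> \<le> 1 / kappa\<^sup>2"
proof -
  define L where "L = 1 / (mnorm (matw A is))\<^sup>2"
  have L: "L > 0" unfolding L_def using mnorm_matw_pos[OF assms(1)] by simp
  have k: "kappa\<^sup>2 > 0" using kappa_pos by simp
  have bounds: "L \<le> \<bar>cderiv (phiw A is) z\<bar>" "\<bar>cderiv (phiw A is) z\<bar> \<le> L / kappa\<^sup>2"
    if "z \<in> Ubar" for z
    using abs_cderiv_phiw_bounds[OF assms(1) that] unfolding L_def by (simp_all add: field_simps)
  have "kappa\<^sup>2 = L / (L / kappa\<^sup>2)" using L k by simp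
  also have "\<dots> \<le> \<bar>cderiv (phiw A is) x\<bar> / \<bar>cderiv (phiw A is) y\<bar>"
    using bounds[OF assms(2)] bounds[OF assms(3)] L k by (intro frac_le) auto
  finally show "kappa\<^sup>2 \<le> \<bar>cderiv (phiw A is) x\<bar> / \<bar>cderiv (phiw A is) y\<bar>" .
  have "\<bar>cderiv (phiw A is) x\<bar> / \<bar>cderiv (phiw A is) y\<bar> \<le> (L / kappa\<^sup>2) / L"
    using bounds[OF assms(2)] bounds[OF assms(3)] L k by (intro frac_le) auto
  thus "\<bar>cderiv (phiw A is) x\<bar> / \<bar>cderiv (phiw A is) y\<bar> \<le> 1 / kappa\<^sup>2"
    using L by simp
qed

lemma bounded_distortion:
  "\<exists>C'>1. \<forall>n. \<forall>is\<in>words \<Lambda> n. \<forall>x\<in>Ubar. \<forall>y\<in>Ubar.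
     1 / C' \<le> \<bar>cderiv (phiw A is) x\<bar> / \<bar>cderiv (phiw A is) y\<bar> \<and>
     \<bar>cderiv (phiw A is) x\<bar> / \<bar>cderiv (phiw A is) y\<bar> \<le> C'"
proof (intro exI[of _ "2 / kappa\<^sup>2"] conjI allI ballI)
  have k: "0 < kappa\<^sup>2" "kappa\<^sup>2 \<le> 1"
    using kappa_pos kappa_le_1 by (auto simp: power_le_one)
  thus "1 < 2 / kappa\<^sup>2" by (simp add: field_simps)
  fix n "is" x y assume "is \<in> words \<Lambda> n" "x \<in> Ubar" "y \<in> Ubar"
  hence "set is \<subseteq> \<Lambda>" "x \<in> Ubar" "y \<in> Ubar" by (simp_all add: words_iff)
  note ratio = cderiv_phiw_ratio_bounds[OF this]
  have "1 / (2 / kappa\<^sup>2) \<le> kappa\<^sup>2" "1 / kappa\<^sup>2 \<le> 2 / kappa\<^sup>2"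
    using k by (simp_all add: field_simps)
  thus "1 / (2 / kappa\<^sup>2) \<le> \<bar>cderiv (phiw A is) x\<bar> / \<bar>cderiv (phiw A is) y\<bar>"
    "\<bar>cderiv (phiw A is) x\<bar> / \<bar>cderiv (phiw A is) y\<bar> \<le> 2 / kappa\<^sup>2"
    using ratio by linarith+
qed

lemma mnorm_matw_append_bounds:
  assumes "set is \<subseteq> \<Lambda>" "set js \<subseteq> \<Lambda>"
  shows "kappa\<^sup>2 * (mnorm (matw A is) * mnorm (matw A js)) \<le> mnorm (matw A (is @ js))"
    "mnorm (matw A (is @ js)) \<le> mnorm (matw A is) * mnorm (matw A js)"
proof -
  show "mnorm (matw A (is @ js)) \<le> mnorm (matw A is) * mnorm (matw A js)"
    unfolding matw_append by (rule mnorm_matrix_mult_le)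
  obtain x where x: "x \<in> Ubar" using Ubar_nonempty by blast
  obtain r x' where rx: "x' \<in> Ubar" "matw A js *v dirv x = r *\<^sub>R dirv x'"
    using matw_dirv_Ubar[OF assms(2) x] by blast
  have "kappa\<^sup>2 * (mnorm (matw A is) * mnorm (matw A js))
      = (kappa * mnorm (matw A js)) * (kappa * mnorm (matw A is))"
    by (simp add: power2_eq_square algebra_simps)
  also have "\<dots> \<le> norm (matw A js *v dirv x) * norm (matw A is *v dirv x')"
    using kappa_le_norm_matw_dirv[OF assms(2) x] kappa_le_norm_matw_dirv[OF assms(1) rx(1)]
      kappa_pos mnorm_nonneg by (intro mult_mono) auto
  also have "\<dots> = norm (matw A (is @ js) *v dirv x)"
    unfolding matw_append matrix_vector_mul_assoc[symmetric] rx(2)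
    by (simp add: matrix_vector_mult_scaleR)
  also have "\<dots> \<le> mnorm (matw A (is @ js))"
    by (rule norm_matrix_vector_mult_dirv_le)
  finally show "kappa\<^sup>2 * (mnorm (matw A is) * mnorm (matw A js)) \<le> mnorm (matw A (is @ js))" .
qed

end

section \<open>Approximately additive sequences\<close>

lemma approx_additive_mult:
  fixes a :: "nat \<Rightarrow> real"
  assumes add: "\<And>n m. n \<ge> 1 \<Longrightarrow> m \<ge> 1 \<Longrightarrow> \<bar>a (n + m) - a n - a m\<bar> \<le> Q"
  shows "m \<ge> 1 \<Longrightarrow> n \<ge> 1 \<Longrightarrow> \<bar>a (m * n) - real m * a n\<bar> \<le> (real m - 1) * Q"
proof (induction m)
  case (Suc m)
  show ?case
  proof (cases "m = 0")
    case False
    hence "\<bar>a (m * n) - real m * a n\<bar> \<le> (real m - 1) * Q"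
      using Suc by simp
    moreover have "\<bar>a (m * n + n) - a (m * n) - a n\<bar> \<le> Q"
      using add False Suc.prems(2) by simp
    ultimately show ?thesis by (simp add: algebra_simps)
  qed simp
qed simp

lemma approx_additive_quotient_diff:
  fixes a :: "nat \<Rightarrow> real"
  assumes Q: "Q \<ge> 0" and add: "\<And>n m. n \<ge> 1 \<Longrightarrow> m \<ge> 1 \<Longrightarrow> \<bar>a (n + m) - a n - a m\<bar> \<le> Q"
    and mn: "m \<ge> 1" "n \<ge> 1"
  shows "\<bar>a n / real n - a m / real m\<bar> \<le> Q / real n + Q / real m"
proof -
  have "\<bar>a (m * n) / real (m * n) - a n / real n\<bar> \<le> Q / real n" if "m \<ge> 1" "n \<ge> 1" for m n
  proof -
    have "a (m * n) / real (m * n) - a n / real n = (a (m * n) - real m * a n) / (real m * real n)"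
      using that by (simp add: field_simps)
    hence "\<bar>a (m * n) / real (m * n) - a n / real n\<bar> = \<bar>a (m * n) - real m * a n\<bar> / (real m * real n)"
      using that by (simp add: abs_divide)
    also have "\<dots> \<le> real m * Q / (real m * real n)"
      using approx_additive_mult[OF add that] that Q
      by (intro divide_right_mono) (auto intro: order_trans simp: mult_right_mono)
    also have "\<dots> = Q / real n" using that by simp
    finally show ?thesis .
  qed
  from this[OF mn] this[OF mn(2,1)] show ?thesis
    unfolding abs_le_iff by (simp add: mult.commute)
qed

lemma approx_additive_limit:
  fixes a :: "nat \<Rightarrow> real"
  assumes Q: "Q \<ge> 0" and add: "\<And>n m. n \<ge> 1 \<Longrightarrow> m \<ge> 1 \<Longrightarrow> \<bar>a (n + m) - a n - a m\<bar> \<le> Q"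
  shows "\<exists>p. (\<lambda>n. a n / real n) \<longlonglongrightarrow> p \<and> (\<forall>n\<ge>1. \<bar>a n - real n * p\<bar> \<le> Q)"
proof -
  note diff = approx_additive_quotient_diff[OF Q add]
  have "Cauchy (\<lambda>n. a n / real n)"
  proof (rule metric_CauchyI)
    fix e :: real assume e: "e > 0"
    obtain M0 :: nat where "real M0 > 2 * Q / e"
      using reals_Archimedean2 by blast
    hence M: "real (Suc M0) > 2 * Q / e" by simp
    hence small: "2 * Q / real (Suc M0) < e"
      using e Q by (cases "Q = 0") (simp_all add: field_simps)
    show "\<exists>M. \<forall>m\<ge>M. \<forall>n\<ge>M. dist (a m / real m) (a n / real n) < e"
    proof (intro exI[of _ "Suc M0"] allI impI)
      fix m n assume mn: "m \<ge> Suc M0" "n \<ge> Suc M0"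
      have "dist (a m / real m) (a n / real n) \<le> Q / real n + Q / real m"
        unfolding dist_real_def using diff mn by (simp add: abs_minus_commute)
      also have "\<dots> \<le> Q / real (Suc M0) + Q / real (Suc M0)"
        using mn Q by (intro add_mono divide_left_mono) auto
      finally show "dist (a m / real m) (a n / real n) < e"
        using small by simp
    qed
  qed
  then obtain p where p: "(\<lambda>n. a n / real n) \<longlonglongrightarrow> p"
    using Cauchy_convergent_iff convergent_def by blast
  have "\<bar>a n - real n * p\<bar> \<le> Q" if n: "n \<ge> 1" for n
  proof -
    have "\<bar>a n / real n - p\<bar> \<le> Q / real n"
    proof (rule LIMSEQ_le)
      show "(\<lambda>m. \<bar>a n / real n - a m / real m\<bar>) \<longlonglongrightarrow> \<bar>a n / real n - p\<bar>"
        by (intro tendsto_intros p)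
      show "(\<lambda>m. Q / real n + Q / real m) \<longlonglongrightarrow> Q / real n"
        using tendsto_add[OF tendsto_const lim_const_over_n[of Q]] by simp
      show "\<exists>N. \<forall>m\<ge>N. \<bar>a n / real n - a m / real m\<bar> \<le> Q / real n + Q / real m"
        using diff n by (intro exI[of _ 1]) auto
    qed
    moreover have "\<bar>a n - real n * p\<bar> = real n * \<bar>a n / real n - p\<bar>"
      using n by (simp add: field_simps flip: abs_mult)
    ultimately show ?thesis using n by (simp add: field_simps)
  qed
  thus ?thesis using p by blast
qed

lemma ln_over_n_tendsto_comparable:
  fixes a b :: "nat \<Rightarrow> real"
  assumes b: "\<And>n. 0 < b n" and ab: "\<And>n. k * b n \<le> a n" "\<And>n. a n \<le> b n / k" and k: "0 < k"
    and lim: "(\<lambda>n. ln (b n) / real n) \<longlonglongrightarrow> p"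
  shows "(\<lambda>n. ln (a n) / real n) \<longlonglongrightarrow> p"
proof -
  have kb: "0 < k * b n" for n
    using b k by simp
  hence a: "0 < a n" for n
    using ab(1) less_le_trans by blast
  have "\<bar>ln (a n) - ln (b n)\<bar> \<le> \<bar>ln k\<bar>" for n
  proof -
    have "ln (k * b n) \<le> ln (a n)"
      using ab(1)[of n] kb[of n] by simp
    hence "ln k + ln (b n) \<le> ln (a n)"
      using b[of n] k by (simp add: ln_mult)
    moreover have "ln (a n) \<le> ln (b n / k)"
      using ab(2)[of n] a[of n] by simp
    hence "ln (a n) \<le> ln (b n) - ln k"
      using b[of n] k by (simp add: ln_div)
    ultimately show ?thesis by linarith
  qed
  hence "eventually (\<lambda>n. norm (ln (a n) / real n - ln (b n) / real n) \<le> \<bar>ln k\<bar> / real n) sequentially"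
    by (intro always_eventually allI)
       (simp add: diff_divide_distrib[symmetric] abs_divide divide_right_mono)
  hence "(\<lambda>n. ln (a n) / real n - ln (b n) / real n) \<longlonglongrightarrow> 0"
    by (rule Lim_null_comparison) (rule lim_const_over_n)
  from Lim_transform[OF lim this] show ?thesis .
qed

lemma powr_comparable:
  fixes k x y s :: real
  assumes "0 < k" "k \<le> 1" "0 < y" "k * y \<le> x" "x \<le> y"
  shows "k powr \<bar>s\<bar> * y powr s \<le> x powr s" "x powr s \<le> (1/k) powr \<bar>s\<bar> * y powr s"
proof -
  have x: "x > 0" using assms by (smt (verit) mult_pos_pos)
  have ky: "(k * y) powr s = k powr s * y powr s" using assms by (simp add: powr_mult)
  have "k powr \<bar>s\<bar> * y powr s \<le> x powr s \<and> x powr s \<le> (1/k) powr \<bar>s\<bar> * y powr s"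
  proof (cases "s \<ge> 0")
    case True
    have "k powr s * y powr s \<le> x powr s"
      using ky assms x True by (metis powr_mono2 less_imp_le mult_pos_pos)
    moreover have "x powr s \<le> y powr s" using assms x True by (intro powr_mono2) auto
    moreover have "y powr s \<le> (1/k) powr s * y powr s"
    proof -
      have "1 \<le> (1/k) powr s" using assms True by (intro ge_one_powr_ge_zero) auto
      thus ?thesis using powr_ge_zero[of y s] by (simp add: mult_le_cancel_right1)
    qed
    ultimately show ?thesis using True by simp
  next
    case False
    have "x powr s \<le> (k * y) powr s" using assms x False by (intro powr_mono2') auto
    also have "\<dots> = (1/k) powr \<bar>s\<bar> * y powr s" using ky False assms
      by (simp add: powr_divide powr_minus_divide[symmetric] powr_minus)
    finally have "x powr s \<le> (1/k) powr \<bar>s\<bar> * y powr s" .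
    moreover have "y powr s \<le> x powr s" using assms x False by (intro powr_mono2') auto
    moreover have "k powr \<bar>s\<bar> * y powr s \<le> y powr s"
      using assms powr_mono2[of "\<bar>s\<bar>" k 1] by (simp add: mult_left_le_one_le)
    ultimately show ?thesis by simp
  qed
  thus "k powr \<bar>s\<bar> * y powr s \<le> x powr s" "x powr s \<le> (1/k) powr \<bar>s\<bar> * y powr s"
    by auto
qed


section \<open>Pressure of the matrix norms\<close>

locale expanding_multicone_ifs = multicone_ifs +
  fixes c lam :: real
  assumes c_pos: "c > 0" and lam_gt_1: "lam > 1"
    and growth: "\<And>n is. is \<in> words \<Lambda> n \<Longrightarrow> c * lam ^ n \<le> mnorm (matw A is)"
begin

definition norm_sum :: "nat \<Rightarrow> real \<Rightarrow> real" where
  "norm_sum n t = (\<Sum>is\<in>words \<Lambda> n. mnorm (matw A is) powr (- t))"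

definition quasi_const :: "real \<Rightarrow> real" where
  "quasi_const t = (1 / kappa\<^sup>2) powr \<bar>t\<bar>"

definition max_norm :: real where
  "max_norm = 1 + (\<Sum>i\<in>\<Lambda>. mnorm (A i))"

lemma max_norm_ge_1: "max_norm \<ge> 1"
  unfolding max_norm_def by (simp add: sum_nonneg mnorm_nonneg)

lemma norm_sum_pos: "norm_sum n t > 0"
  unfolding norm_sum_def using finite_words[OF finite_alphabet] words_nonempty[OF alphabet_nonempty]
  by (intro sum_pos) (auto simp: words_iff dest: mnorm_matw_pos)

lemma quasi_const_ge_1: "quasi_const t \<ge> 1"
proof -
  have "1 \<le> 1 / kappa\<^sup>2" using kappa_pos kappa_le_1 by (simp add: field_simps power_le_one)
  thus ?thesis unfolding quasi_const_def by (intro ge_one_powr_ge_zero) auto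
qed

lemma norm_sum_add_bounds:
  "norm_sum (n + m) t \<le> quasi_const t * (norm_sum n t * norm_sum m t)"
  "norm_sum n t * norm_sum m t \<le> quasi_const t * norm_sum (n + m) t"
proof -
  define f where "f = (\<lambda>is. mnorm (matw A is) powr (- t))"
  have k: "0 < kappa\<^sup>2" "kappa\<^sup>2 \<le> 1" using kappa_pos kappa_le_1 by (auto simp: power_le_one)
  have bnd: "(kappa\<^sup>2) powr \<bar>t\<bar> * (f is * f js) \<le> f (is @ js)" "f (is @ js) \<le> quasi_const t * (f is * f js)"
    if "is \<in> words \<Lambda> n" "js \<in> words \<Lambda> m" for "is" js
  proof -
    have s: "set is \<subseteq> \<Lambda>" "set js \<subseteq> \<Lambda>" using that by (auto simp: words_iff)
    have "0 < mnorm (matw A is) * mnorm (matw A js)" using mnorm_matw_pos s by simp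
    note pc = powr_comparable[OF k this mnorm_matw_append_bounds[OF s], of "- t"]
    have "(mnorm (matw A is) * mnorm (matw A js)) powr (-t) = f is * f js"
      unfolding f_def using mnorm_matw_pos s by (simp add: powr_mult)
    thus "(kappa\<^sup>2) powr \<bar>t\<bar> * (f is * f js) \<le> f (is @ js)" "f (is @ js) \<le> quasi_const t * (f is * f js)"
      using pc unfolding quasi_const_def f_def by simp_all
  qed
  have sum_add: "norm_sum (n + m) t = (\<Sum>is\<in>words \<Lambda> n. \<Sum>js\<in>words \<Lambda> m. f (is @ js))"
    unfolding norm_sum_def f_def by (rule sum_words_add)
  have prod: "norm_sum n t * norm_sum m t = (\<Sum>is\<in>words \<Lambda> n. \<Sum>js\<in>words \<Lambda> m. f is * f js)"
    unfolding norm_sum_def f_def by (rule sum_product)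
  show "norm_sum (n + m) t \<le> quasi_const t * (norm_sum n t * norm_sum m t)"
    unfolding sum_add prod sum_distrib_left using bnd by (intro sum_mono) auto
  have "(kappa\<^sup>2) powr \<bar>t\<bar> * (norm_sum n t * norm_sum m t) \<le> norm_sum (n + m) t"
    unfolding sum_add prod sum_distrib_left using bnd by (intro sum_mono) auto
  moreover have "(kappa\<^sup>2) powr \<bar>t\<bar> * quasi_const t = 1"
    unfolding quasi_const_def using kappa_pos by (simp add: powr_mult[symmetric])
  ultimately have "quasi_const t * ((kappa\<^sup>2) powr \<bar>t\<bar> * (norm_sum n t * norm_sum m t))
      \<le> quasi_const t * norm_sum (n + m) t"
    using quasi_const_ge_1[of t] by (intro mult_left_mono) auto
  thus "norm_sum n t * norm_sum m t \<le> quasi_const t * norm_sum (n + m) t"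
    using \<open>(kappa\<^sup>2) powr \<bar>t\<bar> * quasi_const t = 1\<close> by (simp add: algebra_simps)
qed

lemma ln_norm_sum_approx_additive:
  "\<bar>ln (norm_sum (n + m) t) - ln (norm_sum n t) - ln (norm_sum m t)\<bar> \<le> ln (quasi_const t)"
proof -
  have q: "quasi_const t > 0" using quasi_const_ge_1[of t] by simp
  have sp: "norm_sum n t > 0" "norm_sum m t > 0" "norm_sum (n + m) t > 0"
    using norm_sum_pos by auto
  have "ln (norm_sum (n + m) t) \<le> ln (quasi_const t * (norm_sum n t * norm_sum m t))"
    using norm_sum_add_bounds(1)[of n m t] sp q by simp
  moreover have "ln (norm_sum n t * norm_sum m t) \<le> ln (quasi_const t * norm_sum (n + m) t)"
    using norm_sum_add_bounds(2)[of n t m] sp q by simp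
  ultimately show ?thesis using sp q by (simp add: ln_mult abs_le_iff)
qed

definition mpressure :: "real \<Rightarrow> real" where
  "mpressure t = lim (\<lambda>n. ln (norm_sum n t) / real n)"

lemma mpressure:
  "(\<lambda>n. ln (norm_sum n t) / real n) \<longlonglongrightarrow> mpressure t"
  "n \<ge> 1 \<Longrightarrow> \<bar>ln (norm_sum n t) - real n * mpressure t\<bar> \<le> ln (quasi_const t)"
proof -
  have "ln (quasi_const t) \<ge> 0" using quasi_const_ge_1[of t] by simp
  from approx_additive_limit[OF this ln_norm_sum_approx_additive]
  obtain p where p: "(\<lambda>n. ln (norm_sum n t) / real n) \<longlonglongrightarrow> p"
      "\<forall>n\<ge>1. \<bar>ln (norm_sum n t) - real n * p\<bar> \<le> ln (quasi_const t)"
    by blast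
  moreover have "mpressure t = p" unfolding mpressure_def using p(1) by (rule limI)
  ultimately show "(\<lambda>n. ln (norm_sum n t) / real n) \<longlonglongrightarrow> mpressure t"
    "n \<ge> 1 \<Longrightarrow> \<bar>ln (norm_sum n t) - real n * mpressure t\<bar> \<le> ln (quasi_const t)"
    by auto
qed

lemma mnorm_matw_le_max_norm_power: "is \<in> words \<Lambda> n \<Longrightarrow> mnorm (matw A is) \<le> max_norm ^ n"
proof (induction "is" arbitrary: n)
  case Nil thus ?case using mnorm_mat1_le by (simp add: words_iff)
next
  case (Cons i js)
  hence i: "i \<in> \<Lambda>" and js: "js \<in> words \<Lambda> (n - 1)" and n: "n = Suc (length js)"
    by (auto simp: words_iff)
  have "mnorm (A i) \<le> (\<Sum>i\<in>\<Lambda>. mnorm (A i))"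
    using finite_alphabet i by (intro member_le_sum mnorm_nonneg) auto
  hence "mnorm (A i) \<le> max_norm" unfolding max_norm_def by simp
  hence "mnorm (A i) * mnorm (matw A js) \<le> max_norm * max_norm ^ (n - 1)"
    using Cons.IH[OF js] mnorm_nonneg max_norm_ge_1 by (intro mult_mono) auto
  thus ?case using mnorm_matrix_mult_le[of "A i" "matw A js"] n by simp
qed

lemma norm_sum_shift_bounds:
  assumes "t \<le> t'"
  shows "norm_sum n t' \<le> (c * lam ^ n) powr (- (t' - t)) * norm_sum n t"
    "(max_norm ^ n) powr (- (t' - t)) * norm_sum n t \<le> norm_sum n t'"
proof -
  have "(max_norm ^ n) powr (- (t' - t)) * m powr (- t) \<le> m powr (- t')"
    "m powr (- t') \<le> (c * lam ^ n) powr (- (t' - t)) * m powr (- t)"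
    if "is \<in> words \<Lambda> n" and m: "m = mnorm (matw A is)" for "is" m
  proof -
    have "m > 0" "c * lam ^ n \<le> m" "m \<le> max_norm ^ n" "c * lam ^ n > 0"
      using that mnorm_matw_pos growth mnorm_matw_le_max_norm_power c_pos lam_gt_1
      by (auto simp: words_iff)
    moreover have "m powr (- t') = m powr (- (t' - t)) * m powr (- t)"
      by (simp add: powr_add[symmetric])
    ultimately show "(max_norm ^ n) powr (- (t' - t)) * m powr (- t) \<le> m powr (- t')"
      "m powr (- t') \<le> (c * lam ^ n) powr (- (t' - t)) * m powr (- t)"
      using assms by (auto intro!: mult_right_mono powr_mono2')
  qed
  thus "norm_sum n t' \<le> (c * lam ^ n) powr (- (t' - t)) * norm_sum n t"
    "(max_norm ^ n) powr (- (t' - t)) * norm_sum n t \<le> norm_sum n t'"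
    unfolding norm_sum_def sum_distrib_left by (auto intro!: sum_mono)
qed

lemma mpressure_decrease_bounds:
  assumes "t \<le> t'"
  shows "mpressure t' \<le> mpressure t - (t' - t) * ln lam"
    "mpressure t - (t' - t) * ln max_norm \<le> mpressure t'"
proof -
  note mn = max_norm_ge_1
  have upper: "ln (norm_sum n t') \<le> ln (norm_sum n t) - (t' - t) * ln c - real n * ((t' - t) * ln lam)"
    and lower: "ln (norm_sum n t) - real n * ((t' - t) * ln max_norm) \<le> ln (norm_sum n t')" for n
  proof -
    have "0 < c * lam ^ n" "0 < max_norm ^ n" using c_pos lam_gt_1 mn by auto
    hence pos: "0 < (c * lam ^ n) powr (- (t' - t)) * norm_sum n t"
      "0 < (max_norm ^ n) powr (- (t' - t)) * norm_sum n t"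
      using norm_sum_pos[of n t] by (metis mult_pos_pos powr_gt_zero less_irrefl)+
    have "ln (norm_sum n t') \<le> ln ((c * lam ^ n) powr (- (t' - t)) * norm_sum n t)"
      using norm_sum_shift_bounds(1)[OF assms, of n] norm_sum_pos[of n t'] pos(1) by simp
    thus "ln (norm_sum n t') \<le> ln (norm_sum n t) - (t' - t) * ln c - real n * ((t' - t) * ln lam)"
      using norm_sum_pos[of n t] c_pos lam_gt_1
      by (simp add: ln_mult ln_powr ln_realpow algebra_simps)
    have "ln ((max_norm ^ n) powr (- (t' - t)) * norm_sum n t) \<le> ln (norm_sum n t')"
      using norm_sum_shift_bounds(2)[OF assms, of n] norm_sum_pos[of n t'] pos(2) by simp
    thus "ln (norm_sum n t) - real n * ((t' - t) * ln max_norm) \<le> ln (norm_sum n t')"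
      using norm_sum_pos[of n t] mn by (simp add: ln_mult ln_powr ln_realpow algebra_simps)
  qed
  show "mpressure t' \<le> mpressure t - (t' - t) * ln lam"
  proof (rule LIMSEQ_le[OF mpressure(1)])
    show "(\<lambda>n. ln (norm_sum n t) / real n - (t' - t) * ln c / real n - (t' - t) * ln lam)
        \<longlonglongrightarrow> mpressure t - (t' - t) * ln lam"
      using tendsto_diff[OF tendsto_diff[OF mpressure(1)[of t] lim_const_over_n[of "(t' - t) * ln c"]]
          tendsto_const[of "(t' - t) * ln lam"]] by simp
    show "\<exists>N. \<forall>n\<ge>N. ln (norm_sum n t') / real n
        \<le> ln (norm_sum n t) / real n - (t' - t) * ln c / real n - (t' - t) * ln lam"
    proof (intro exI[of _ 1] allI impI)
      fix n :: nat assume n: "n \<ge> 1"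
      have "ln (norm_sum n t') / real n
          \<le> (ln (norm_sum n t) - (t' - t) * ln c - real n * ((t' - t) * ln lam)) / real n"
        using upper n by (intro divide_right_mono) auto
      also have "\<dots> = ln (norm_sum n t) / real n - (t' - t) * ln c / real n - (t' - t) * ln lam"
        using n by (simp add: diff_divide_distrib)
      finally show "ln (norm_sum n t') / real n
          \<le> ln (norm_sum n t) / real n - (t' - t) * ln c / real n - (t' - t) * ln lam" .
    qed
  qed
  show "mpressure t - (t' - t) * ln max_norm \<le> mpressure t'"
  proof (rule LIMSEQ_le[OF _ mpressure(1)])
    show "(\<lambda>n. ln (norm_sum n t) / real n - (t' - t) * ln max_norm)
        \<longlonglongrightarrow> mpressure t - (t' - t) * ln max_norm"
      by (intro tendsto_intros mpressure(1))
    show "\<exists>N. \<forall>n\<ge>N. ln (norm_sum n t) / real n - (t' - t) * ln max_norm \<le> ln (norm_sum n t') / real n"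
    proof (intro exI[of _ 1] allI impI)
      fix n :: nat assume n: "n \<ge> 1"
      have "ln (norm_sum n t) / real n - (t' - t) * ln max_norm
          = (ln (norm_sum n t) - real n * ((t' - t) * ln max_norm)) / real n"
        using n by (simp add: diff_divide_distrib)
      also have "\<dots> \<le> ln (norm_sum n t') / real n"
        using lower n by (intro divide_right_mono) auto
      finally show "ln (norm_sum n t) / real n - (t' - t) * ln max_norm \<le> ln (norm_sum n t') / real n" .
    qed
  qed
qed


lemma mpressure_0: "mpressure 0 = ln (card \<Lambda>)"
proof -
  have "norm_sum n 0 = (\<Sum>is\<in>words \<Lambda> n. 1)" for n
    unfolding norm_sum_def by (intro sum.cong) (auto simp: words_iff dest: mnorm_matw_pos)
  hence S0: "norm_sum n 0 = real (card \<Lambda>) ^ n" for n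
    using card_words[OF finite_alphabet] by simp
  have card: "card \<Lambda> > 0" using finite_alphabet alphabet_nonempty by (simp add: card_gt_0_iff)
  have "eventually (\<lambda>n. ln (card \<Lambda>) = ln (norm_sum n 0) / real n) sequentially"
    using eventually_ge_at_top[of "1::nat"]
  proof eventually_elim
    case (elim n) thus ?case using card by (simp add: S0 ln_realpow)
  qed
  hence "(\<lambda>n. ln (norm_sum n 0) / real n) \<longlonglongrightarrow> ln (card \<Lambda>)"
    by (rule Lim_transform_eventually[rotated]) simp
  thus ?thesis using mpressure(1)[of 0] LIMSEQ_unique by blast
qed

lemma mpressure_strict_antimono:
  assumes "t < t'"
  shows "mpressure t' < mpressure t"
proof -
  have "(t' - t) * ln lam > 0" using assms lam_gt_1 by simp
  thus ?thesis using mpressure_decrease_bounds(1)[of t t'] assms by simp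
qed

lemma mpressure_lipschitz: "\<bar>mpressure a - mpressure b\<bar> \<le> (ln max_norm + ln lam) * \<bar>a - b\<bar>"
proof -
  have "0 \<le> ln lam" "0 \<le> ln max_norm" using lam_gt_1 max_norm_ge_1 by auto
  have "\<bar>mpressure t - mpressure t'\<bar> \<le> (ln max_norm + ln lam) * (t' - t)" if "t \<le> t'" for t t'
  proof -
    have "0 \<le> (t' - t) * ln lam" "0 \<le> (t' - t) * ln max_norm"
      using that \<open>0 \<le> ln lam\<close> \<open>0 \<le> ln max_norm\<close> by simp_all
    thus ?thesis using mpressure_decrease_bounds[OF that] by (simp add: abs_le_iff algebra_simps)
  qed
  from this[of a b] this[of b a] show ?thesis
    by (cases "a \<le> b") (simp_all add: abs_minus_commute)
qed

lemma continuous_on_mpressure: "continuous_on S mpressure"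
proof (rule lipschitz_on_continuous_on)
  show "(ln max_norm + ln lam)-lipschitz_on S mpressure"
    using mpressure_lipschitz lam_gt_1 max_norm_ge_1
    by (intro lipschitz_onI) (auto simp: dist_real_def)
qed

lemma exists_mpressure_zero: "\<exists>t\<ge>0. mpressure t = 0"
proof -
  have "card \<Lambda> \<ge> 1" using finite_alphabet alphabet_nonempty by (simp add: Suc_le_eq card_gt_0_iff)
  hence P0: "mpressure 0 \<ge> 0" by (simp add: mpressure_0)
  define T where "T = mpressure 0 / ln lam + 1"
  have T: "T \<ge> 0" unfolding T_def using P0 lam_gt_1 by simp
  have "mpressure T \<le> mpressure 0 - T * ln lam"
    using mpressure_decrease_bounds(1)[OF T] by simp
  also have "\<dots> = - ln lam" unfolding T_def using lam_gt_1 by (simp add: field_simps)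
  finally have "mpressure T \<le> - ln lam" .
  hence "mpressure T \<le> 0" using ln_gt_zero[OF lam_gt_1] by linarith
  thus ?thesis using IVT2'[of mpressure T 0 0, OF _ P0 T continuous_on_mpressure] by blast
qed

definition mzero :: real where
  "mzero = (SOME t. t \<ge> 0 \<and> mpressure t = 0)"

lemma mzero_nonneg: "mzero \<ge> 0"
  and mpressure_mzero: "mpressure mzero = 0"
  using someI_ex[OF exists_mpressure_zero] unfolding mzero_def by auto

lemma mpressure_eq_0_iff: "mpressure t = 0 \<longleftrightarrow> t = mzero"
  using mpressure_strict_antimono[of t mzero] mpressure_strict_antimono[of mzero t] mpressure_mzero
  by (cases t mzero rule: linorder_cases) auto

lemma dnorm_powr_comparable:
  assumes "set is \<subseteq> \<Lambda>"
  shows "(kappa\<^sup>2) powr \<bar>s\<bar> * mnorm (matw A is) powr (- (2 * s)) \<le> dnorm U (phiw A is) powr s"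
    "dnorm U (phiw A is) powr s \<le> mnorm (matw A is) powr (- (2 * s)) / (kappa\<^sup>2) powr \<bar>s\<bar>"
proof -
  define m where "m = mnorm (matw A is)"
  define y where "y = dnorm U (phiw A is)"
  define q where "q = (kappa\<^sup>2) powr \<bar>s\<bar>"
  have k: "0 < kappa\<^sup>2" "kappa\<^sup>2 \<le> 1" using kappa_pos kappa_le_1 by (auto simp: power_le_one)
  have q: "q > 0" "(1 / kappa\<^sup>2) powr \<bar>s\<bar> = 1 / q"
    unfolding q_def using k by (simp_all add: powr_divide)
  have m: "m > 0" unfolding m_def using mnorm_matw_pos[OF assms] .
  have y: "1 / m\<^sup>2 \<le> y" "y \<le> 1 / (kappa\<^sup>2 * m\<^sup>2)"
    using dnorm_phiw_bounds[OF assms] unfolding m_def y_def by auto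
  hence "kappa\<^sup>2 * y \<le> 1 / m\<^sup>2"
    using k m by (simp add: field_simps)
  moreover have "0 < y" using y(1) m by (meson divide_pos_pos less_le_trans zero_less_one zero_less_power)
  moreover have "(1 / m\<^sup>2) powr s = m powr (- (2 * s))"
  proof -
    have "1 / m\<^sup>2 = m powr (-2)" using m by (simp add: powr_minus divide_inverse)
    thus ?thesis by (simp add: powr_powr)
  qed
  ultimately have "q * y powr s \<le> m powr (- (2 * s))" "m powr (- (2 * s)) \<le> y powr s / q"
    using powr_comparable[OF k, of y "1 / m\<^sup>2" s] y(1) q unfolding q_def by auto
  thus "(kappa\<^sup>2) powr \<bar>s\<bar> * mnorm (matw A is) powr (- (2 * s)) \<le> dnorm U (phiw A is) powr s"
    "dnorm U (phiw A is) powr s \<le> mnorm (matw A is) powr (- (2 * s)) / (kappa\<^sup>2) powr \<bar>s\<bar>"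
    using q(1) unfolding m_def y_def q_def[symmetric] by (simp_all add: field_simps)
qed

lemma pressure_seq_tendsto: "pressure_seq A \<Lambda> U s \<longlonglongrightarrow> mpressure (2 * s)"
proof -
  define k where "k = (kappa\<^sup>2) powr \<bar>s\<bar>"
  have k: "k > 0" unfolding k_def using kappa_pos by simp
  have "(\<lambda>n. ln (\<Sum>is\<in>words \<Lambda> n. dnorm U (phiw A is) powr s) / real n) \<longlonglongrightarrow> mpressure (2 * s)"
  proof (rule ln_over_n_tendsto_comparable[OF norm_sum_pos _ _ k mpressure(1)])
    fix n
    show "k * norm_sum n (2 * s) \<le> (\<Sum>is\<in>words \<Lambda> n. dnorm U (phiw A is) powr s)"
      unfolding norm_sum_def k_def sum_distrib_left
      using dnorm_powr_comparable(1) by (intro sum_mono) (auto simp: words_iff)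
    show "(\<Sum>is\<in>words \<Lambda> n. dnorm U (phiw A is) powr s) \<le> norm_sum n (2 * s) / k"
      unfolding norm_sum_def k_def sum_divide_distrib
      using dnorm_powr_comparable(2) by (intro sum_mono) (auto simp: words_iff)
  qed
  thus ?thesis unfolding pressure_seq_def .
qed

lemma pressure_zero_set: "{s. pressure_seq A \<Lambda> U s \<longlonglongrightarrow> 0} = {mzero / 2}"
proof -
  have "pressure_seq A \<Lambda> U s \<longlonglongrightarrow> 0 \<longleftrightarrow> mpressure (2 * s) = 0" for s
    using pressure_seq_tendsto[of s] LIMSEQ_unique by auto
  thus ?thesis using mpressure_eq_0_iff by auto
qed

lemma summable_norm_sum:
  assumes "mzero < t"
  shows "summable (\<lambda>n. norm_sum (Suc n) t)"
proof (rule summable_comparison_test')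
  define Q where "Q = ln (quasi_const t)"
  have neg: "mpressure t < 0"
    using mpressure_strict_antimono[OF assms] mpressure_mzero by simp
  show "summable (\<lambda>n. exp (Q + mpressure t) * exp (mpressure t) ^ n)"
    using neg by (intro summable_mult summable_geometric) simp
  fix n
  have "ln (norm_sum (Suc n) t) \<le> real (Suc n) * mpressure t + Q"
    using mpressure(2)[of "Suc n" t] unfolding Q_def by (simp add: abs_le_iff)
  hence "norm_sum (Suc n) t \<le> exp (real (Suc n) * mpressure t + Q)"
    using norm_sum_pos by (metis exp_le_cancel_iff exp_ln)
  also have "\<dots> = exp (Q + mpressure t) * exp (mpressure t) ^ n"
    by (simp add: exp_add[symmetric] exp_of_nat_mult[symmetric] algebra_simps)
  finally show "norm (norm_sum (Suc n) t) \<le> exp (Q + mpressure t) * exp (mpressure t) ^ n"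
    using norm_sum_pos[of "Suc n" t] by simp
qed

lemma not_summable_norm_sum:
  assumes "t \<le> mzero"
  shows "\<not> summable (\<lambda>n. norm_sum (Suc n) t)"
proof
  define Q where "Q = ln (quasi_const t)"
  have "mpressure t \<ge> 0"
    using mpressure_strict_antimono[of t mzero] mpressure_mzero assms by (cases "t = mzero") auto
  hence "exp (- Q) \<le> norm_sum (Suc n) t" for n
    using mpressure(2)[of "Suc n" t] norm_sum_pos unfolding Q_def
    by (simp add: abs_le_iff) (smt (verit) exp_le_cancel_iff exp_ln mult_nonneg_nonneg of_nat_0_le_iff)
  moreover assume "summable (\<lambda>n. norm_sum (Suc n) t)"
  hence "(\<lambda>n. norm_sum (Suc n) t) \<longlonglongrightarrow> 0" by (rule summable_LIMSEQ_zero)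
  ultimately have "exp (- Q) \<le> 0" by (intro LIMSEQ_le_const) auto
  thus False by simp
qed

lemma crit_exp_eq_mzero: "crit_exp A \<Lambda> = mzero"
proof -
  have "{t. t \<ge> 0 \<and> \<not> summable (\<lambda>n. \<Sum>is\<in>words \<Lambda> (Suc n). mnorm (matw A is) powr (- t))} = {0..mzero}"
    using summable_norm_sum not_summable_norm_sum unfolding norm_sum_def[symmetric]
    by (force simp: not_less)
  thus ?thesis unfolding crit_exp_def using mzero_nonneg by simp
qed

lemma lam_powr_eq: "lam powr (- 2 * real n) = (1 / lam\<^sup>2) ^ n"
proof -
  have "lam powr (- 2 * real n) = inverse (lam powr (real (2 * n)))"
    by (simp add: powr_minus[symmetric])
  also have "\<dots> = inverse (lam ^ (2 * n))"
    using lam_gt_1 by (subst powr_realpow) auto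
  also have "\<dots> = (1 / lam\<^sup>2) ^ n"
    by (simp add: power_mult power_one_over divide_inverse power_inverse)
  finally show ?thesis .
qed

lemma dnorm_phiw_decay:
  assumes "is \<in> words \<Lambda> n"
  shows "dnorm U (phiw A is) \<le> 1 / (kappa\<^sup>2 * c\<^sup>2) * lam powr (- 2 * real n)"
proof -
  define m where "m = mnorm (matw A is)"
  have pos: "0 < kappa\<^sup>2 * (c * lam ^ n)\<^sup>2" using c_pos lam_gt_1 kappa_pos by simp
  have "(c * lam ^ n)\<^sup>2 \<le> m\<^sup>2"
    unfolding m_def using growth[OF assms] c_pos lam_gt_1 by (intro power_mono) auto
  hence "kappa\<^sup>2 * (c * lam ^ n)\<^sup>2 \<le> kappa\<^sup>2 * m\<^sup>2"
    by (simp add: mult_left_mono)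
  hence "1 / (kappa\<^sup>2 * m\<^sup>2) \<le> 1 / (kappa\<^sup>2 * (c * lam ^ n)\<^sup>2)"
    using pos by (intro frac_le) auto
  moreover have "dnorm U (phiw A is) \<le> 1 / (kappa\<^sup>2 * m\<^sup>2)"
    using dnorm_phiw_bounds(2) assms unfolding m_def by (simp add: words_iff)
  ultimately have "dnorm U (phiw A is) \<le> 1 / (kappa\<^sup>2 * (c * lam ^ n)\<^sup>2)"
    by linarith
  also have "\<dots> = 1 / (kappa\<^sup>2 * c\<^sup>2) * (1 / lam\<^sup>2) ^ n"
    by (simp add: power_mult_distrib power_one_over field_simps flip: power_mult)
  finally show ?thesis unfolding lam_powr_eq .
qed

lemma eventually_contracting: "\<exists>K. \<forall>k\<ge>K. \<forall>is\<in>words \<Lambda> k. dnorm U (phiw A is) < 1"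
proof -
  define C where "C = 1 / (kappa\<^sup>2 * c\<^sup>2)"
  have C: "C > 0" unfolding C_def using kappa_pos c_pos by simp
  have "(\<lambda>k. C * (1 / lam\<^sup>2) ^ k) \<longlonglongrightarrow> 0"
    using lam_gt_1 by (intro tendsto_mult_right_zero LIMSEQ_power_zero) (simp add: power_one_over)
  hence "(\<lambda>k. C * lam powr (- 2 * real k)) \<longlonglongrightarrow> 0"
    unfolding lam_powr_eq .
  hence "eventually (\<lambda>k. C * lam powr (- 2 * real k) < 1) sequentially"
    by (rule order_tendstoD) simp
  then obtain K where K: "\<And>k. k \<ge> K \<Longrightarrow> C * lam powr (- 2 * real k) < 1"
    unfolding eventually_sequentially by blast
  show ?thesis
    using dnorm_phiw_decay K unfolding C_def by (meson le_less_trans)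
qed

end

theorem lemma3p4:
  fixes A :: "'i \<Rightarrow> real^2^2" and \<Lambda> :: "'i set" and U :: "real set"
    and c lam :: real
  assumes fin: "finite \<Lambda>" and ne: "\<Lambda> \<noteq> {}"
    and SL2: "\<forall>i\<in>\<Lambda>. det (A i) = 1"
    and mc: "multicone U"
    and inv: "strictly_invariant (\<lambda>i. phiA (A i)) \<Lambda> U"
    and c_pos: "c > 0" and lam: "lam > 1"
    and growth: "\<forall>n. \<forall>is\<in>words \<Lambda> n. mnorm (matw A is) \<ge> c * lam ^ n"
  shows "(\<exists>C'>1. \<forall>n. \<forall>is\<in>words \<Lambda> n. \<forall>x\<in>circ_top closure_of U. \<forall>y\<in>circ_top closure_of U.
            1 / C' \<le> \<bar>cderiv (phiw A is) x\<bar> / \<bar>cderiv (phiw A is) y\<bar> \<and>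
            \<bar>cderiv (phiw A is) x\<bar> / \<bar>cderiv (phiw A is) y\<bar> \<le> C')
     \<and> (\<exists>C''>0. \<forall>n. \<forall>is\<in>words \<Lambda> n. dnorm U (phiw A is) \<le> C'' * lam powr (- 2 * real n))
     \<and> (\<exists>K. \<forall>k\<ge>K. \<forall>is\<in>words \<Lambda> k. dnorm U (phiw A is) < 1)
     \<and> {s. pressure_seq A \<Lambda> U s \<longlonglongrightarrow> 0} = {crit_exp A \<Lambda> / 2}"
proof -
  interpret expanding_multicone_ifs A \<Lambda> U c lam
    using assms by unfold_locales auto
  have "1 / (kappa\<^sup>2 * c\<^sup>2) > 0" using kappa_pos c_pos by simp
  hence "\<exists>C''>0. \<forall>n. \<forall>is\<in>words \<Lambda> n. dnorm U (phiw A is) \<le> C'' * lam powr (- 2 * real n)"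
    using dnorm_phiw_decay by blast
  thus ?thesis
    using bounded_distortion eventually_contracting pressure_zero_set
    unfolding Ubar_def crit_exp_eq_mzero by blast
qed

end
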